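(* Consider the volume-pricing market described in the context, treating $\kappa_{\mathrm{avg}}$ and $\kappa_{\mathrm{peak}}$ as independent variable parameters with all other parameters fixed. (i) In the opt-saturated case (i.e., when $R'(p_0)<0$), as $\kappa_{\mathrm{peak}}$ decreases (with $\kappa_{\mathrm{avg}}$ fixed), the equilibrium price $p^\star$ decreases, the equilibrium net-utility of every user increases, and the equilibrium revenue $R(p^\star)$ increases (precisely, $\partial R(p^\star)/\partial\kappa_{\mathrm{peak}}<0$); consequently user surplus and social welfare increase. (ii) In the opt-unsaturated case (i.e., when $R'(p_0)>0$), as $\kappa_{\mathrm{avg}}$ decreases, the equilibrium payment per unit traffic $p^\star\kappa_{\mathrm{avg}}$ decreases, so the equilibrium net-utility of every user increases, and the maximal revenue $\max_{p\in\mathcal P}R(p)$ increases; consequently user surplus and social welfare increase.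
   Context: Market model (single cell). There are $\hat N$ users (treated as a continuum of mass $\hat N$) in one base-station cell with capacity $C_{3g}>0$ (traffic volume per time slot), and time slots $t\in T=\{1,\dots,|T|\}$. Each user's daily traffic demand $\Phi$ is random with density $f_\Phi(x)=x^{-\sigma}/Z$ for $0\le x\le\Phi_{\max}$, where $0<\sigma<1$ and $Z=\Phi_{\max}^{1-\sigma}/(1-\sigma)$. All users share a temporal preference $w(t)> 0$ with $\sum_{t\in T}w(t)=1$; a user with demand $\Phi$ has per-slot demand $\phi(t)=w(t)\Phi$. The willingness to pay is $\gamma(t)=w(t)^{1-\theta}$ with price sensitivity $\theta\in(0,1)$. Offloading indicators: constants $\kappa_{\mathrm{avg}},\kappa_{\mathrm{peak}}\in(0,1]$ (independent of price). Delay profile and WiFi contact probabilities are homogeneous across users and time, so that every user's daily cellular (3G) traffic equals $\kappa_{\mathrm{avg}}$ times its total (3G+WiFi) traffic; and if $X_{\rm tot}(p)$ is the total traffic sent in the cell in a day at price $p$, the peak per-slot cellular traffic is $A(p)=\kappa_{\mathrm{peak}}X_{\rm tot}(p)$. Volume pricing with unit price $p>0$ per unit of cellular traffic: a user with demand $\Phi$ chooses $x(t)\in[0,\phi(t)]$ to maximize its net-utility $U_\Phi(x)=\sum_{t}w(t)^{1-\theta}x(t)^\theta-p\,\kappa_{\mathrm{avg}}\sum_t x(t)$; its optimal choice is $x^\star_\Phi(t)=w(t)\min\{\Phi,(\theta/(p\kappa_{\mathrm{avg}}))^{1/(1-\theta)}\}$ (every user participates). Then $X_{\rm tot}(p)=\hat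 N\int_0^{\Phi_{\max}}\sum_t x^\star_\Phi(t)f_\Phi(\Phi)\,d\Phi$, and the provider's revenue with linear cellular cost coefficient $\eta>0$ is $R(p)=(p-\eta)\,\kappa_{\mathrm{avg}}X_{\rm tot}(p)$. The quantity $p\kappa_{\mathrm{avg}}$ is called the payment per unit traffic. Feasible price set: $\mathcal P=\{p: R(p)>0,\ A(p)\le C_{3g}\}$; threshold price $p_0=\inf\mathcal P$. An equilibrium price is any $p^\star\in\arg\max_{p\in\mathcal P}R(p)$ (unique in both cases considered). The network is saturated at $p$ if $A(p)=C_{3g}$; for a unique equilibrium price $p^\star$, the network is called opt-saturated if it is saturated at $p^\star$ and opt-unsaturated otherwise. User surplus is the total net-utility of users; social welfare is user surplus plus provider revenue. *)

theory Defs
  imports "HOL-Analysis.Analysis"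
begin

text \<open>Single-cell volume-pricing market. The fixed parameters (everything except
  kappa_avg and kappa_peak) are bundled in a record. Time slots form a finite set mT,
  mw is the temporal preference w(t).\<close>

record 't market =
  mN      :: real
  mC      :: real
  msig    :: real
  mPhimax :: real
  mtheta  :: real
  meta    :: real
  mT      :: "'t set"
  mw      :: "'t \<Rightarrow> real"

definition valid_market :: "'t market \<Rightarrow> bool" where
  "valid_market M \<longleftrightarrow> mN M > 0 \<and> mC M > 0 \<and> 0 < msig M \<and> msig M < 1 \<and> mPhimax M > 0 \<and>
     0 < mtheta M \<and> mtheta M < 1 \<and> meta M > 0 \<and> finite (mT M) \<and> mT M \<noteq> {} \<and>
     (\<forall>t\<in>mT M. mw M t > 0) \<and> (\<Sum>t\<in>mT M. mw M t) = 1"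

definition Zc :: "'t market \<Rightarrow> real" where
  "Zc M = mPhimax M powr (1 - msig M) / (1 - msig M)"

definition dens :: "'t market \<Rightarrow> real \<Rightarrow> real" where
  "dens M x = (if 0 \<le> x \<and> x \<le> mPhimax M then x powr (- msig M) / Zc M else 0)"

definition xopt :: "'t market \<Rightarrow> real \<Rightarrow> real \<Rightarrow> real \<Rightarrow> 't \<Rightarrow> real" where
  "xopt M ka p Phi t =
     mw M t * min Phi ((mtheta M / (p * ka)) powr (1 / (1 - mtheta M)))"

text \<open>Total (3G+WiFi) traffic in the cell per day at price p.\<close>
definition Xtot :: "'t market \<Rightarrow> real \<Rightarrow> real \<Rightarrow> real" where
  "Xtot M ka p = mN M * integral {0..mPhimax M}
      (\<lambda>Phi. (\<Sum>t\<in>mT M. xopt M ka p Phi t) * dens M Phi)"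

definition Rev :: "'t market \<Rightarrow> real \<Rightarrow> real \<Rightarrow> real" where
  "Rev M ka p = (p - meta M) * ka * Xtot M ka p"

definition Apeak :: "'t market \<Rightarrow> real \<Rightarrow> real \<Rightarrow> real \<Rightarrow> real" where
  "Apeak M ka kp p = kp * Xtot M ka p"

definition Feas :: "'t market \<Rightarrow> real \<Rightarrow> real \<Rightarrow> real set" where
  "Feas M ka kp = {p. p > 0 \<and> Rev M ka p > 0 \<and> Apeak M ka kp p \<le> mC M}"

definition p0 :: "'t market \<Rightarrow> real \<Rightarrow> real \<Rightarrow> real" where
  "p0 M ka kp = Inf (Feas M ka kp)"

definition is_eq_price :: "'t market \<Rightarrow> real \<Rightarrow> real \<Rightarrow> real \<Rightarrow> bool" where
  "is_eq_price M ka kp p \<longleftrightarrow> p \<in> Feas M ka kp \<and> (\<forall>q\<in>Feas M ka kp. Rev M ka q \<le> Rev M ka p)"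

definition eq_price :: "'t market \<Rightarrow> real \<Rightarrow> real \<Rightarrow> real" where
  "eq_price M ka kp = (THE p. is_eq_price M ka kp p)"

definition opt_sat_cond :: "'t market \<Rightarrow> real \<Rightarrow> real \<Rightarrow> bool" where
  "opt_sat_cond M ka kp \<longleftrightarrow>
     (\<exists>D. (Rev M ka has_real_derivative D) (at (p0 M ka kp)) \<and> D < 0)"

definition opt_unsat_cond :: "'t market \<Rightarrow> real \<Rightarrow> real \<Rightarrow> bool" where
  "opt_unsat_cond M ka kp \<longleftrightarrow>
     (\<exists>D. (Rev M ka has_real_derivative D) (at (p0 M ka kp)) \<and> D > 0)"

definition netutil :: "'t market \<Rightarrow> real \<Rightarrow> real \<Rightarrow> ('t \<Rightarrow> real) \<Rightarrow> real" where
  "netutil M ka p x = (\<Sum>t\<in>mT M. mw M t powr (1 - mtheta M) * x t powr mtheta M)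
                      - p * ka * (\<Sum>t\<in>mT M. x t)"

definition user_util :: "'t market \<Rightarrow> real \<Rightarrow> real \<Rightarrow> real \<Rightarrow> real" where
  "user_util M ka p Phi = netutil M ka p (xopt M ka p Phi)"

definition usurplus :: "'t market \<Rightarrow> real \<Rightarrow> real \<Rightarrow> real" where
  "usurplus M ka p = mN M * integral {0..mPhimax M} (\<lambda>Phi. user_util M ka p Phi * dens M Phi)"

definition welfare :: "'t market \<Rightarrow> real \<Rightarrow> real \<Rightarrow> real" where
  "welfare M ka p = usurplus M ka p + Rev M ka p"

end

theory Submission
  imports Defs
begin

(* Everything is governed by the payment per unit traffic q = p * kappa_avg.  A user
   with demand Phi sends min(Phi, cap q) units in total, cap q = (theta/q)^(1/(1-theta)),
   so the daily traffic is a function traffic q of q alone, the revenue is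
   R(p) = (q - c) * traffic q with c = eta * kappa_avg, and every user's optimal
   net-utility is strictly decreasing in q.  Above the break point q_brk, where
   cap q_brk = Phi_max, traffic is smooth and the slope rev_slope c q of
   q -> (q - c) * traffic q is single-crossing: once it is non-positive it stays
   negative.  The feasible prices form the ray [p0, oo), and
   - if R'(p0) < 0, the equilibrium price is p0, fixed by the saturation equation
     kappa_peak * traffic (p0 * kappa_avg) = C; hence it increases with kappa_peak,
     and the inverse function theorem shows that the equilibrium revenue has a
     negative derivative in kappa_peak;
   - if R'(p0) > 0, the equilibrium payment is the unique root of rev_slope c,
     and this root increases with c, i.e. with kappa_avg.
   The file first proves a few generic analytic facts, then develops the model in
   the locale market_model: traffic and its derivative, the single-crossing
   property, the feasible set and the two equilibrium regimes, the users'
   utilities, the saturating load and the two comparative-statics results.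
   Theorem theorem2 is their combination. *)

lemma cont_nbhd_less:
  fixes g :: "real \<Rightarrow> real"
  assumes "isCont g x" "g x < C"
  shows "\<exists>d>0. \<forall>y. \<bar>y - x\<bar> < d \<longrightarrow> g y < C"
proof -
  have "eventually (\<lambda>y. g y < C) (at x)"
    using order_tendstoD(2)[OF assms(1)[unfolded isCont_def] assms(2)] .
  then obtain d where d: "d > 0" "\<And>y. y \<noteq> x \<Longrightarrow> dist y x < d \<Longrightarrow> g y < C"
    unfolding eventually_at by blast
  show ?thesis
  proof (intro exI[of _ d] conjI allI impI)
    fix y assume "\<bar>y - x\<bar> < d"
    then show "g y < C" using d assms(2) by (cases "y = x") (auto simp: dist_real_def)
  qed (use d in simp)
qed

lemma cont_nbhd_greater:
  fixes g :: "real \<Rightarrow> real"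
  assumes "isCont g x" "C < g x"
  shows "\<exists>d>0. \<forall>y. \<bar>y - x\<bar> < d \<longrightarrow> C < g y"
  using cont_nbhd_less[where g="\<lambda>y. - g y" and x=x and C="- C"] assms by auto

lemma integral_pos_of_pos_tail:
  fixes f :: "real \<Rightarrow> real"
  assumes int: "f integrable_on {a..b}" and am: "a \<le> m" and mb: "m < b"
    and nonneg: "\<And>x. x \<in> {a..b} \<Longrightarrow> 0 \<le> f x"
    and cont: "continuous_on {m..b} f" and pos: "\<And>x. x \<in> {m<..<b} \<Longrightarrow> 0 < f x"
  shows "0 < integral {a..b} f"
proof -
  have "0 \<le> integral {a..m} f"
    by (rule integral_nonneg[OF integrable_subinterval_real[OF int]]) (use am mb nonneg in auto)
  moreover have "integral {m..b} (\<lambda>x. 0) < integral {m..b} f"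
    by (rule integral_less_real[OF continuous_on_const cont]) (use mb pos in auto)
  moreover have "integral {a..m} f + integral {m..b} f = integral {a..b} f"
    using Henstock_Kurzweil_Integration.integral_combine[OF am _ int] mb by simp
  ultimately show ?thesis by simp
qed

text \<open>The elementary inequality behind the single-crossing property of the revenue
  slope: with t < 1, the expression A - t y - P (A - y) can only become negative
  as y decreases and P increases.\<close>

lemma crossing_ineq:
  fixes A ya yb Pa Pb t :: real
  assumes "0 < t" "t < 1" "0 < yb" "yb < ya" "ya \<le> A" "0 < Pa" "Pa < Pb"
    and h: "A - t * ya \<le> Pa * (A - ya)"
  shows "A - t * yb < Pb * (A - yb)"
proof -
  have "A - t * ya > 0" using assms by (smt (verit) mult_less_cancel_right2 mult_pos_pos)
  then have "Pa * (A - ya) > 0" using h by linarith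
  then have Aa: "A - ya > 0" using assms by (simp add: zero_less_mult_iff)
  have Ab: "A - yb > 0" using Aa assms by linarith
  have "(A - t * yb) * (A - ya) \<le> (A - t * ya) * (A - yb)"
  proof -
    have "(A - t * ya) * (A - yb) - (A - t * yb) * (A - ya) = A * (ya - yb) * (1 - t)"
      by (simp add: algebra_simps)
    moreover have "A * (ya - yb) * (1 - t) \<ge> 0" using assms by simp
    ultimately show ?thesis by linarith
  qed
  also have "\<dots> \<le> Pa * (A - ya) * (A - yb)" using h Ab by (simp add: mult_right_mono)
  also have "\<dots> < Pb * (A - ya) * (A - yb)" using assms Aa Ab by simp
  finally have "(A - t * yb) * (A - ya) < (Pb * (A - yb)) * (A - ya)" by (simp add: algebra_simps)
  then show ?thesis using Aa by simp
qed

lemma eq_price_iff_unique_max: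
  assumes "P \<in> Feas M ka kp" "\<And>q. q \<in> Feas M ka kp \<Longrightarrow> q \<noteq> P \<Longrightarrow> Rev M ka q < Rev M ka P"
  shows "is_eq_price M ka kp p \<longleftrightarrow> p = P"
  using assms unfolding is_eq_price_def by (metis less_imp_le not_less order_refl)

locale market_model =
  fixes M :: "'t market"
  assumes vm: "valid_market M"
begin

definition "s = 1 - msig M"
definition "Ph = mPhimax M"
definition "th = mtheta M"
definition "r = 1 / (1 - th)"
definition "Kc = mN M / Zc M"

text \<open>cap q is the traffic a user wants when paying q per unit; a user with demand
  Phi sends min(Phi, cap q).  Hint m is the integral of min(x, m) x^(s - 1) over
  [0, Ph] (for m \<le> Ph), so traffic q = Kc * Hint (min (cap q) Ph) is the total
  daily traffic at payment q.\<close>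

definition "cap q = (th / q) powr (1 / (1 - th))"
definition "Hint m = m * Ph powr s / s - m powr (s+1) / (s*(s+1))"
definition "traffic q = Kc * Hint (min (cap q) Ph)"

lemma market_facts: "0 < s" "s < 1" "0 < Ph" "0 < th" "th < 1" "0 < meta M" "0 < mN M" "0 < mC M"
  "Zc M = Ph powr s / s" "0 < Zc M" "finite (mT M)" "(\<Sum>t\<in>mT M. mw M t) = 1" "\<And>t. t \<in> mT M \<Longrightarrow> mw M t > 0"
  using vm by (auto simp: valid_market_def s_def Ph_def th_def Zc_def)

lemma r_gt_1: "r > 1" using market_facts by (simp add: r_def)
lemma Kc_pos: "Kc > 0" using market_facts by (simp add: Kc_def)

lemma dens_eq: "0 \<le> x \<Longrightarrow> x \<le> Ph \<Longrightarrow> dens M x = x powr (-(1 - s)) / Zc M"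
  by (simp add: dens_def Ph_def s_def)

lemma integral_min_lower:
  assumes v: "0 < v" "v \<le> Ph" "v \<le> mu"
  shows "((\<lambda>x. min x mu * dens M x) has_integral (v powr (s+1) / (s+1) / Zc M)) {0..v}"
proof -
  have "((\<lambda>x. x powr s) has_integral (v powr (s+1) / (s+1))) {0..v}"
    using has_integral_powr_from_0[of s v] market_facts v by simp
  then have "((\<lambda>x. x powr s / Zc M) has_integral (v powr (s+1) / (s+1) / Zc M)) {0..v}"
    by (rule has_integral_divide)
  moreover have "x powr s / Zc M = min x mu * dens M x" if "x \<in> {0..v}" for x
  proof -
    have "x * x powr (-(1-s)) = x powr s"
      using that market_facts by (cases "x = 0") (simp_all add: powr_mult_base)
    then show ?thesis using that v by (simp add: dens_eq)
  qed
  ultimately show ?thesis using has_integral_cong by (smt (verit))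
qed

lemma integral_min_upper:
  assumes v: "0 < v" "v \<le> Ph" and vmu: "\<And>x. x \<in> {v..Ph} \<Longrightarrow> min x mu = v"
  shows "((\<lambda>x. min x mu * dens M x) has_integral (v * (Ph powr s / s - v powr s / s) / Zc M)) {v..Ph}"
proof -
  have "((\<lambda>x. x powr (-(1-s))) has_integral (Ph powr s / s - v powr s / s)) {v..Ph}"
  proof (rule fundamental_theorem_of_calculus_interior[where f="\<lambda>x. x powr s / s"])
    show "v \<le> Ph" using v by simp
    show "continuous_on {v..Ph} (\<lambda>x. x powr s / s)"
      by (intro continuous_intros) (use v market_facts in auto)
    fix x assume "x \<in> {v<..<Ph}"
    then have "x > 0" using v by auto
    have "((\<lambda>x. x powr s / s) has_real_derivative (s * x powr (s - 1) / s)) (at x)"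
      using DERIV_cdivide[OF has_real_derivative_powr[OF \<open>x>0\<close>, of s], of s] by simp
    moreover have "s * x powr (s - 1) / s = x powr (-(1-s))" using market_facts by simp
    ultimately show "((\<lambda>x. x powr s / s) has_vector_derivative x powr (-(1-s))) (at x)"
      by (simp add: has_real_derivative_iff_has_vector_derivative)
  qed
  then have "((\<lambda>x. v * x powr (-(1-s)) / Zc M) has_integral (v * (Ph powr s / s - v powr s / s) / Zc M)) {v..Ph}"
    using has_integral_divide[OF has_integral_mult_right] by simp
  moreover have "v * x powr (-(1-s)) / Zc M = min x mu * dens M x" if "x \<in> {v..Ph}" for x
    using that v vmu[OF that] by (simp add: dens_eq)
  ultimately show ?thesis using has_integral_cong by (smt (verit))
qed

lemma integral_min:
  assumes mu: "mu > 0"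
  shows "((\<lambda>x. min x mu * dens M x) has_integral (Hint (min mu Ph) / Zc M)) {0..Ph}"
proof -
  define v where "v = min mu Ph"
  have v: "0 < v" "v \<le> Ph" "v \<le> mu" using mu market_facts by (auto simp: v_def)
  have "((\<lambda>x. min x mu * dens M x) has_integral
     (v powr (s+1) / (s+1) / Zc M + v * (Ph powr s / s - v powr s / s) / Zc M)) {0..Ph}"
    by (rule has_integral_combine[OF _ _ integral_min_lower[OF v] integral_min_upper[OF v(1,2)]])
      (use v in \<open>auto simp: v_def\<close>)
  moreover have "v powr (s+1) / (s+1) / Zc M + v * (Ph powr s / s - v powr s / s) / Zc M
      = Hint v / Zc M"
  proof -
    have k: "1/(s+1) - 1/s = -1/(s*(s+1))" using market_facts(1) by (simp add: field_simps)
    have "v powr (s+1) / (s+1) + v * (Ph powr s / s - v powr s / s)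
        = v * Ph powr s / s + v * v powr s * (1/(s+1) - 1/s)"
      using v by (simp add: powr_add algebra_simps)
    then have "v powr (s+1) / (s+1) + v * (Ph powr s / s - v powr s / s) = Hint v"
      unfolding Hint_def k using v by (simp add: powr_add)
    then show ?thesis by (metis add_divide_distrib)
  qed
  ultimately show ?thesis by (simp add: v_def)
qed

lemma Xtot_eq:
  assumes "p > 0" "ka > 0"
  shows "Xtot M ka p = traffic (p * ka)"
proof -
  have mu: "cap (p*ka) > 0" using assms market_facts by (simp add: cap_def)
  have "(\<Sum>t\<in>mT M. xopt M ka p x t) = min x (cap (p*ka))" for x
  proof -
    have "(\<Sum>t\<in>mT M. xopt M ka p x t) = (\<Sum>t\<in>mT M. mw M t) * min x (cap (p*ka))"
      by (simp add: xopt_def cap_def th_def sum_distrib_right)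
    then show ?thesis using market_facts by simp
  qed
  then have "Xtot M ka p = mN M * integral {0..Ph} (\<lambda>x. min x (cap (p*ka)) * dens M x)"
    by (simp add: Xtot_def Ph_def)
  also have "\<dots> = traffic (p*ka)"
    using integral_unique[OF integral_min[OF mu]] by (simp add: traffic_def Kc_def)
  finally show ?thesis .
qed

lemma Rev_eq: "p > 0 \<Longrightarrow> ka > 0 \<Longrightarrow> Rev M ka p = (p * ka - meta M * ka) * traffic (p * ka)"
  by (simp add: Rev_def Xtot_eq algebra_simps)

text \<open>The break point q_brk is the payment at which the demand cap equals Phi_max;
  for q \<le> q_brk every user sends its full demand.\<close>

definition "q_brk = th / Ph powr (1 - th)"

lemma q_brk_pos: "q_brk > 0" using market_facts by (simp add: q_brk_def)

lemma cap_pos: "q > 0 \<Longrightarrow> cap q > 0" using market_facts by (simp add: cap_def)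

lemma cap_less: "0 < q1 \<Longrightarrow> q1 < q2 \<Longrightarrow> cap q2 < cap q1"
proof -
  assume q: "0 < q1" "q1 < q2"
  have "th / q2 < th / q1" using q market_facts by (simp add: divide_strict_left_mono)
  moreover have "0 \<le> th / q2" using q market_facts by simp
  ultimately show ?thesis unfolding cap_def using r_gt_1 powr_less_mono2[of r] by (simp add: r_def[symmetric])
qed

lemma cap_le: "0 < q1 \<Longrightarrow> q1 \<le> q2 \<Longrightarrow> cap q2 \<le> cap q1"
  using cap_less by (cases "q1 = q2") (auto intro: less_imp_le)

lemma cap_q_brk: "cap q_brk = Ph"
proof -
  have "th / q_brk = Ph powr (1 - th)" using market_facts by (simp add: q_brk_def)
  then have "cap q_brk = (Ph powr (1 - th)) powr (1 / (1 - th))" by (simp add: cap_def)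
  also have "\<dots> = Ph" using market_facts by (simp add: powr_powr)
  finally show ?thesis .
qed

lemma cap_inv: "e > 0 \<Longrightarrow> cap (th / e powr (1 - th)) = e"
proof -
  assume e: "e > 0"
  have "th / (th / e powr (1 - th)) = e powr (1 - th)" using market_facts e by simp
  then have "cap (th / e powr (1 - th)) = (e powr (1 - th)) powr (1 / (1 - th))" by (simp add: cap_def)
  also have "\<dots> = e" using market_facts e by (simp add: powr_powr)
  finally show ?thesis .
qed

lemma cap_le_iff: "q > 0 \<Longrightarrow> (cap q \<le> Ph \<longleftrightarrow> q_brk \<le> q)"
  using cap_less[of q q_brk] cap_less[of q_brk q] cap_q_brk q_brk_pos by (cases q q_brk rule: linorder_cases) auto

lemma cap_less_iff: "q > 0 \<Longrightarrow> (cap q < Ph \<longleftrightarrow> q_brk < q)"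
  using cap_less[of q q_brk] cap_less[of q_brk q] cap_q_brk q_brk_pos by (cases q q_brk rule: linorder_cases) auto

lemma cap_deriv: "q > 0 \<Longrightarrow> (cap has_real_derivative (- (r * cap q / q))) (at q)"
proof -
  assume q: "q > 0"
  have tq: "th / q > 0" using q market_facts by simp
  have d1: "((\<lambda>q. th / q) has_real_derivative (- th / q^2)) (at q)"
    using q by (auto intro!: derivative_eq_intros simp: power2_eq_square field_simps)
  have "((\<lambda>q. (th / q) powr r) has_real_derivative (r * (th / q) powr (r - 1) * (- th / q^2))) (at q)"
    using DERIV_chain2[OF has_real_derivative_powr[OF tq, of r] d1] by simp
  moreover have "r * (th / q) powr (r - 1) * (- th / q^2) = - (r * cap q / q)"
  proof -
    have e: "(th / q) * (th / q) powr (r - 1) = (th / q) powr r"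
      using powr_mult_base[OF less_imp_le[OF tq], of "r - 1"] by simp
    have "- (r * cap q / q) = - (r * ((th / q) * (th / q) powr (r - 1)) / q)"
      by (simp only: e cap_def r_def[symmetric])
    also have "\<dots> = r * (th / q) powr (r - 1) * (- th / q^2)"
      using q by (simp add: power2_eq_square field_simps)
    finally show ?thesis by simp
  qed
  moreover have "cap = (\<lambda>q. (th / q) powr r)" by (simp add: cap_def[abs_def] r_def)
  ultimately show ?thesis by simp
qed

lemma cap_cont: "continuous_on {0<..} cap"
  using cap_deriv by (meson DERIV_isCont continuous_at_imp_continuous_on greaterThan_iff)

definition "dHint m = (Ph powr s - m powr s) / s"

lemma Hint_deriv: "m > 0 \<Longrightarrow> (Hint has_real_derivative dHint m) (at m)"
proof -
  assume m: "m > 0"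
  have a: "((\<lambda>m. m * (Ph powr s) / s) has_real_derivative Ph powr s / s) (at m)"
    using DERIV_cdivide[OF DERIV_cmult_Id[of "Ph powr s" m], of s] by (simp add: mult.commute)
  have b: "((\<lambda>m. m powr (s+1) / (s * (s + 1))) has_real_derivative
      ((s + 1) * m powr (s + 1 - 1)) / (s * (s + 1))) (at m)"
    using DERIV_cdivide[OF has_real_derivative_powr[OF m]] .
  have "(Hint has_real_derivative (Ph powr s / s - ((s + 1) * m powr (s + 1 - 1)) / (s * (s + 1)))) (at m)"
    unfolding Hint_def[abs_def] using DERIV_diff[OF a b] .
  moreover have "(s + 1) * m powr s / (s * (s + 1)) = m powr s / s" using market_facts(1) by simp
  ultimately show ?thesis by (simp add: dHint_def diff_divide_distrib)
qed

lemma Hint_cont: "continuous_on {0<..} Hint"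
  using Hint_deriv by (meson DERIV_isCont continuous_at_imp_continuous_on greaterThan_iff)

lemma Hint_strict: "0 < a \<Longrightarrow> a < b \<Longrightarrow> b \<le> Ph \<Longrightarrow> Hint a < Hint b"
proof -
  assume ab: "0 < a" "a < b" "b \<le> Ph"
  show ?thesis
  proof (rule DERIV_pos_imp_increasing_open[OF ab(2)])
    fix x assume x: "a < x" "x < b"
    then have "x powr s < Ph powr s" using ab market_facts by (intro powr_less_mono2) auto
    then show "\<exists>y. DERIV Hint x :> y \<and> y > 0" using Hint_deriv[of x] x ab market_facts by (auto simp: dHint_def)
  next
    show "continuous_on {a..b} Hint" using Hint_cont by (rule continuous_on_subset) (use ab in auto)
  qed
qed

lemma Hint_le: "0 < a \<Longrightarrow> a \<le> b \<Longrightarrow> b \<le> Ph \<Longrightarrow> Hint a \<le> Hint b"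
  using Hint_strict by (cases "a = b") (auto intro: less_imp_le)

lemma Hint_pos: "0 < m \<Longrightarrow> m \<le> Ph \<Longrightarrow> 0 < Hint m"
proof -
  assume m: "0 < m" "m \<le> Ph"
  have "m powr s \<le> Ph powr s" using m market_facts by (intro powr_mono2) auto
  have e: "m powr (s+1) = m * m powr s" using m by (simp add: powr_add)
  have "m powr s / (s * (s + 1)) < Ph powr s / s"
  proof -
    have "m powr s / (s * (s + 1)) < m powr s / s"
      using m market_facts by (intro divide_strict_left_mono) (auto simp: add_pos_pos)
    also have "\<dots> \<le> Ph powr s / s" using \<open>m powr s \<le> Ph powr s\<close> market_facts by (simp add: divide_right_mono)
    finally show ?thesis .
  qed
  then have "m * (m powr s / (s * (s + 1))) < m * (Ph powr s / s)" by (rule mult_strict_left_mono) (use m in simp)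
  then have "m * m powr s / (s * (s + 1)) < m * Ph powr s / s" by (metis times_divide_eq_right)
  then show ?thesis unfolding Hint_def e by linarith
qed

lemma Hint_le_lin: "m > 0 \<Longrightarrow> Hint m \<le> m * Ph powr s / s"
  unfolding Hint_def using market_facts(1) by (simp add: add_pos_pos)

lemma dHint_pos: "0 < m \<Longrightarrow> m < Ph \<Longrightarrow> dHint m > 0"
proof -
  assume m: "0 < m" "m < Ph"
  then have "m powr s < Ph powr s" using market_facts by (intro powr_less_mono2) auto
  then show ?thesis using market_facts by (simp add: dHint_def)
qed

lemma traffic_pos: "q > 0 \<Longrightarrow> traffic q > 0"
  unfolding traffic_def using Kc_pos Hint_pos[of "min (cap q) Ph"] cap_pos[of q] market_facts by simp

lemma traffic_mono: "0 < q1 \<Longrightarrow> q1 \<le> q2 \<Longrightarrow> traffic q2 \<le> traffic q1"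
  unfolding traffic_def using Kc_pos cap_le[of q1 q2] cap_pos[of q2] market_facts
  by (intro mult_left_mono Hint_le) auto

lemma traffic_strict: "0 < q1 \<Longrightarrow> q1 < q2 \<Longrightarrow> q_brk < q2 \<Longrightarrow> traffic q2 < traffic q1"
proof -
  assume q: "0 < q1" "q1 < q2" "q_brk < q2"
  have "cap q2 < Ph" using cap_less_iff[of q2] q by simp
  have "cap q2 < min (cap q1) Ph" using cap_less[OF q(1,2)] \<open>cap q2 < Ph\<close> by simp
  then have "Hint (min (cap q2) Ph) < Hint (min (cap q1) Ph)"
    using Hint_strict[of "cap q2" "min (cap q1) Ph"] cap_pos[of q2] q market_facts \<open>cap q2 < Ph\<close> by simp
  then show ?thesis unfolding traffic_def using Kc_pos by simp
qed

lemma traffic_const: "0 < q \<Longrightarrow> q \<le> q_brk \<Longrightarrow> traffic q = Kc * Hint Ph"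
  using cap_le_iff[of q] cap_q_brk by (cases "q = q_brk") (auto simp: traffic_def min_def)

lemma traffic_cont: "continuous_on {0<..} traffic"
proof -
  have "continuous_on {0<..} (\<lambda>q. min (cap q) Ph)" by (intro continuous_intros cap_cont)
  moreover have "(\<lambda>q. min (cap q) Ph) ` {0<..} \<subseteq> {0<..}" using cap_pos market_facts by auto
  ultimately have "continuous_on {0<..} (\<lambda>q. Hint (min (cap q) Ph))"
    using continuous_on_compose2[OF Hint_cont] by blast
  then show ?thesis unfolding traffic_def[abs_def] by (intro continuous_intros)
qed

lemma traffic_isCont: "q > 0 \<Longrightarrow> isCont traffic q"
  using traffic_cont continuous_on_eq_continuous_at[of "{0<..}" traffic] by auto

definition "traffic_hi q = Kc * Hint (cap q)"

definition "dtraffic_hi q = Kc * dHint (cap q) * (- (r * cap q / q))"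

definition "rev_slope c q = traffic_hi q + (q - c) * dtraffic_hi q"

lemma traffic_eq_hi: "q > 0 \<Longrightarrow> q_brk \<le> q \<Longrightarrow> traffic q = traffic_hi q"
  using cap_le_iff[of q] by (simp add: traffic_def traffic_hi_def)

lemma traffic_hi_deriv: "q > 0 \<Longrightarrow> (traffic_hi has_real_derivative dtraffic_hi q) (at q)"
proof -
  assume q: "q > 0"
  have "((\<lambda>q. Hint (cap q)) has_real_derivative (dHint (cap q) * (- (r * cap q / q)))) (at q)"
    using DERIV_chain2[OF Hint_deriv[OF cap_pos[OF q]] cap_deriv[OF q]] .
  from DERIV_cmult[OF this, of Kc] show ?thesis by (simp add: traffic_hi_def[abs_def] dtraffic_hi_def mult.assoc)
qed

lemma traffic_hi_cont: "continuous_on {0<..} traffic_hi"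
  using traffic_hi_deriv by (meson DERIV_isCont continuous_at_imp_continuous_on greaterThan_iff)

lemma traffic_hi_pos: "q > 0 \<Longrightarrow> q_brk \<le> q \<Longrightarrow> traffic_hi q > 0"
  using traffic_eq_hi traffic_pos by force

lemma dtraffic_hi_neg: "q_brk < q \<Longrightarrow> dtraffic_hi q < 0"
proof -
  assume q: "q_brk < q"
  then have q0: "q > 0" using q_brk_pos by linarith
  have "dHint (cap q) > 0" using dHint_pos[OF cap_pos[OF q0]] cap_less_iff[OF q0] q by simp
  moreover have "r * cap q / q > 0" using r_gt_1 cap_pos[OF q0] q0 by simp
  ultimately have "Kc * dHint (cap q) * (r * cap q / q) > 0" using Kc_pos by (intro mult_pos_pos)
  moreover have "dtraffic_hi q = - (Kc * dHint (cap q) * (r * cap q / q))" by (simp add: dtraffic_hi_def)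
  ultimately show ?thesis by linarith
qed

lemma dtraffic_hi_q_brk: "dtraffic_hi q_brk = 0" by (simp add: dtraffic_hi_def dHint_def cap_q_brk)

lemma dtraffic_hi_nonpos: "q_brk \<le> x \<Longrightarrow> dtraffic_hi x \<le> 0"
  using dtraffic_hi_neg dtraffic_hi_q_brk by (cases "x = q_brk") (auto intro: less_imp_le)

lemma rev_slope_q_brk: "rev_slope c q_brk = traffic_hi q_brk" by (simp add: rev_slope_def dtraffic_hi_q_brk)

lemma rev_slope_self: "rev_slope c c = traffic_hi c" by (simp add: rev_slope_def)

lemma rev_slope_cont: "continuous_on {0<..} (rev_slope c)"
proof -
  have "\<forall>x\<in>{0<..}. cap x \<ge> 0 \<and> (cap x = 0 \<longrightarrow> s > 0)"
    using cap_pos market_facts(1) by (auto intro: less_imp_le)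
  then have "continuous_on {0<..} (\<lambda>q. cap q powr s)"
    by (rule continuous_on_powr'[OF cap_cont continuous_on_const])
  then have "continuous_on {0<..} dtraffic_hi"
    unfolding dtraffic_hi_def[abs_def] dHint_def by (intro continuous_intros cap_cont) (use cap_pos market_facts(1) in fastforce)+
  then show ?thesis unfolding rev_slope_def[abs_def] by (intro continuous_intros traffic_hi_cont)
qed

lemma rev_slope_isCont: "q > 0 \<Longrightarrow> isCont (rev_slope c) q"
  using rev_slope_cont continuous_on_eq_continuous_at[of "{0<..}" "rev_slope c"] by auto

lemma rev_hi_deriv: "x > 0 \<Longrightarrow> ((\<lambda>q. (q - c) * traffic_hi q) has_real_derivative rev_slope c x) (at x)"
proof -
  assume x: "x > 0"
  have "((\<lambda>q. (q - c) * traffic_hi q) has_real_derivative (1 * traffic_hi x + dtraffic_hi x * (x - c))) (at x)"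
    by (rule DERIV_mult[OF _ traffic_hi_deriv[OF x]]) (auto intro!: derivative_eq_intros)
  then show ?thesis by (simp add: rev_slope_def algebra_simps)
qed

lemma rev_hi_cont: "0 < a \<Longrightarrow> continuous_on {a..b} (\<lambda>q. (q - c) * traffic_hi q)"
  using rev_hi_deriv by (intro DERIV_atLeastAtMost_imp_continuous_on) (meson less_le_trans)

text \<open>Closed form of the revenue slope: a positive factor times
  Ph^s - cap^s/(s+1) - (1 - c/q) r (Ph^s - cap^s).  This is what makes the sign
  analysis below elementary.\<close>

lemma rev_slope_form:
  assumes q: "q > 0"
  shows "rev_slope c q = Kc * cap q / s * (Ph powr s - (1 / (s + 1)) * cap q powr s
                    - ((1 - c / q) * r) * (Ph powr s - cap q powr s))"
proof -
  define m where "m = cap q"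
  define A where "A = Ph powr s"
  define y where "y = cap q powr s"
  have m: "m > 0" using cap_pos[OF q] by (simp add: m_def)
  have s: "s > 0" using market_facts by simp
  have "rev_slope c q = Kc * (m * A / s - m * y / (s * (s + 1)))
       + (q - c) * (Kc * ((A - y) / s) * (- (r * m / q)))"
    using m by (simp add: rev_slope_def traffic_hi_def dtraffic_hi_def Hint_def dHint_def
        powr_add m_def A_def y_def)
  also have "(q - c) * (Kc * ((A - y) / s) * (- (r * m / q)))
      = - (Kc * m / s) * ((1 - c / q) * r * (A - y))"
    using s q by (simp add: field_simps)
  also have "m * y / (s * (s + 1)) = m / s * ((1 / (s + 1)) * y)" by simp
  finally show ?thesis by (simp add: m_def A_def y_def algebra_simps)
qed

text \<open>Single-crossing property of the revenue slope above the break point: once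
  it is non-positive it stays negative.  Hence revenue in q is quasi-concave there.\<close>

lemma rev_slope_single_crossing:
  assumes c: "0 < c" "c < qa" "qa < qb" "q_brk \<le> qa" and h: "rev_slope c qa \<le> 0"
  shows "rev_slope c qb < 0"
proof -
  have qa0: "qa > 0" "qb > 0" using c by auto
  define ya where "ya = cap qa powr s"
  define yb where "yb = cap qb powr s"
  define A where "A = Ph powr s"
  define Pa where "Pa = (1 - c / qa) * r"
  define Pb where "Pb = (1 - c / qb) * r"
  have ma: "cap qa \<le> Ph" using cap_le_iff[OF qa0(1)] c by simp
  have mb: "0 < cap qb" "cap qb < cap qa" using cap_pos[OF qa0(2)] cap_less[OF qa0(1) c(3)] by auto
  have y: "0 < yb" "yb < ya" "ya \<le> A"
    using mb ma market_facts unfolding ya_def yb_def A_def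
    by (auto intro: powr_less_mono2 powr_mono2)
  have "c / qb < c / qa" using c by (simp add: divide_strict_left_mono)
  moreover have "c / qa < 1" using c by simp
  ultimately have P: "0 < Pa" "Pa < Pb" using r_gt_1 unfolding Pa_def Pb_def by auto
  have t: "0 < 1 / (s + 1)" "1 / (s + 1) < 1" using market_facts by auto
  have fa: "Kc * cap qa / s > 0" using Kc_pos cap_pos[OF qa0(1)] market_facts by simp
  have fb: "Kc * cap qb / s > 0" using Kc_pos cap_pos[OF qa0(2)] market_facts by simp
  have "Kc * cap qa / s * (A - (1 / (s + 1)) * ya - Pa * (A - ya)) \<le> 0"
    using h unfolding rev_slope_form[OF qa0(1), of c] ya_def[symmetric] A_def[symmetric] Pa_def[symmetric] .
  then have "A - (1 / (s + 1)) * ya - Pa * (A - ya) \<le> 0" using fa by (smt (verit) mult_pos_pos)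
  then have "A - (1 / (s + 1)) * yb < Pb * (A - yb)" using crossing_ineq[OF t y P] by linarith
  then have "Kc * cap qb / s * (A - (1 / (s + 1)) * yb - Pb * (A - yb)) < 0"
    by (intro mult_pos_neg[OF fb]) linarith
  then show ?thesis unfolding rev_slope_form[OF qa0(2), of c] yb_def[symmetric] A_def[symmetric] Pb_def[symmetric] .
qed

lemma Rev_deriv:
  assumes ka: "ka > 0" and p: "p > 0" "q_brk < p * ka"
  shows "(Rev M ka has_real_derivative (ka * rev_slope (meta M * ka) (p * ka))) (at p)"
proof -
  have d: "((\<lambda>x. (x * ka - meta M * ka) * traffic_hi (x * ka)) has_real_derivative
      ka * rev_slope (meta M * ka) (p * ka)) (at p)"
  proof -
    have d1: "((\<lambda>x. x * ka) has_real_derivative ka) (at p)" by (auto intro!: derivative_eq_intros)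
    have "p * ka > 0" using p ka by simp
    from DERIV_chain2[OF rev_hi_deriv[OF this, of "meta M * ka"] d1] show ?thesis by (simp add: mult.commute)
  qed
  show ?thesis
  proof (rule has_field_derivative_transform_within_open[OF d, of "{q_brk / ka<..}"])
    show "p \<in> {q_brk / ka<..}" using p ka by (simp add: pos_divide_less_eq)
    fix x assume "x \<in> {q_brk / ka<..}"
    then have x1: "q_brk < x * ka" using ka by (auto simp: pos_divide_less_eq)
    then have x: "x > 0" using q_brk_pos ka by (smt (verit) zero_less_mult_iff)
    show "(x * ka - meta M * ka) * traffic_hi (x * ka) = Rev M ka x"
      using x1 Rev_eq[OF x ka] traffic_eq_hi[of "x * ka"] x ka by simp
  qed simp
qed

text \<open>If the revenue slope vanishes at qs beyond the break point, then qs is the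
  unique maximiser of q -> (q - c) * traffic q over all q > 0: revenue rises
  strictly up to qs (single crossing) and falls strictly after it.\<close>

lemma rev_increasing_to_root:
  assumes c: "0 < c" "c < qs" "rev_slope c qs = 0" and x: "q_brk \<le> x" "x < qs"
  shows "(x - c) * traffic x < (qs - c) * traffic qs"
proof -
  have x0: "x > 0" using x q_brk_pos by simp
  have "(x - c) * traffic_hi x < (qs - c) * traffic_hi qs"
  proof (rule DERIV_pos_imp_increasing_open[OF x(2)])
    fix y assume y: "x < y" "y < qs"
    have y0: "y > 0" using y x0 by simp
    have "rev_slope c y > 0"
    proof (cases "y \<le> c")
      case True
      have "dtraffic_hi y \<le> 0" using dtraffic_hi_nonpos y x by simp
      then have "(y - c) * dtraffic_hi y \<ge> 0" using True by (simp add: mult_nonpos_nonpos)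
      moreover have "traffic_hi y > 0" using traffic_hi_pos[OF y0] y x by simp
      ultimately show ?thesis by (simp add: rev_slope_def)
    next
      case False
      then show ?thesis
        using rev_slope_single_crossing[of c y qs] y x c by force
    qed
    then show "\<exists>z. ((\<lambda>q. (q - c) * traffic_hi q) has_real_derivative z) (at y) \<and> z > 0"
      using rev_hi_deriv[OF y0] by blast
  qed (rule rev_hi_cont[OF x0])
  then show ?thesis using traffic_eq_hi x x0 c by simp
qed

lemma rev_decreasing_from_root:
  assumes c: "0 < c" "c < qs" "q_brk < qs" "rev_slope c qs = 0" and q: "qs < q"
  shows "(q - c) * traffic q < (qs - c) * traffic qs"
proof -
  have qs0: "qs > 0" using c by simp
  have "(q - c) * traffic_hi q < (qs - c) * traffic_hi qs"
  proof (rule DERIV_neg_imp_decreasing_open[OF q])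
    fix y assume y: "qs < y" "y < q"
    have "rev_slope c y < 0" using rev_slope_single_crossing[of c qs y] y c by simp
    then show "\<exists>z. ((\<lambda>q. (q - c) * traffic_hi q) has_real_derivative z) (at y) \<and> z < 0"
      using rev_hi_deriv[of y] y qs0 by force
  qed (rule rev_hi_cont[OF qs0])
  then show ?thesis using traffic_eq_hi c q qs0 by simp
qed

lemma rev_unique_max:
  assumes c: "0 < c" "c < qs" "q_brk < qs" "rev_slope c qs = 0" and q: "q > 0" "q \<noteq> qs"
  shows "(q - c) * traffic q < (qs - c) * traffic qs"
proof (cases q qs rule: linorder_cases)
  case less
  show ?thesis
  proof (cases "q_brk \<le> q")
    case True then show ?thesis using rev_increasing_to_root c less by simp
  next
    case False
    have KH: "Kc * Hint Ph > 0" using Kc_pos Hint_pos[OF market_facts(3)] by simp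
    have "(q - c) * traffic q = (q - c) * (Kc * Hint Ph)" using traffic_const False q by simp
    also have "\<dots> < (q_brk - c) * (Kc * Hint Ph)"
      by (rule mult_strict_right_mono) (use False KH in auto)
    also have "\<dots> = (q_brk - c) * traffic q_brk" using traffic_const q_brk_pos by simp
    also have "\<dots> < (qs - c) * traffic qs" using rev_increasing_to_root[of c qs q_brk] c by simp
    finally show ?thesis .
  qed
next
  case equal then show ?thesis using q by simp
next
  case greater then show ?thesis using rev_decreasing_from_root c by simp
qed

lemma rev_slope_neg_criterion:
  assumes q: "q > 0" and e: "0 < e" "e < 1" "1 < (1 - e) * (1 - e) * r"
    and cq: "c / q \<le> e" and y: "cap q powr s \<le> e * Ph powr s"
  shows "rev_slope c q < 0"
proof -
  define A where "A = Ph powr s"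
  define y where "y = cap q powr s"
  have A: "A > 0" using market_facts by (simp add: A_def)
  have a1: "(1 - e) * r \<le> (1 - c / q) * r" using cq r_gt_1 by (intro mult_right_mono) auto
  have a2: "(1 - e) * A \<le> A - y" using y by (simp add: A_def y_def algebra_simps)
  have "(1 - e) * r * ((1 - e) * A) \<le> (1 - c / q) * r * (A - y)"
    using e r_gt_1 A a1 by (intro mult_mono[OF a1 a2]) auto
  moreover have "(1 - e) * r * ((1 - e) * A) = ((1 - e) * (1 - e) * r) * A" by (simp add: algebra_simps)
  moreover have "((1 - e) * (1 - e) * r) * A > 1 * A" using e A by (intro mult_strict_right_mono) auto
  moreover have "(1 / (s + 1)) * y \<ge> 0" using market_facts by (simp add: y_def)
  ultimately have E: "A - (1 / (s + 1)) * y - ((1 - c / q) * r) * (A - y) < 0" by linarith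
  have f: "Kc * cap q / s > 0" using Kc_pos cap_pos[OF q] market_facts by simp
  show ?thesis unfolding rev_slope_form[OF q] A_def[symmetric] y_def[symmetric]
    by (rule mult_pos_neg[OF f E])
qed

lemma rev_slope_neg_large:
  assumes c: "0 < c"
  shows "\<exists>q. B < q \<and> q_brk < q \<and> rev_slope c q < 0"
proof -
  define e where "e = (1 - 1 / r) / 2"
  have "0 < e" "e < 1 / 2" using r_gt_1 by (auto simp: e_def)
  then have e: "0 < e" "e < 1" by simp_all
  have er: "1 < (1 - e) * (1 - e) * r"
  proof -
    have "(1 - e) * (1 - e) = 1 / r + e * e" by (simp add: e_def algebra_simps)
    then have "(1 - e) * (1 - e) * r = 1 + e * e * r" using r_gt_1 by (simp add: distrib_right)
    then show ?thesis using e r_gt_1 by simp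
  qed
  define m0 where "m0 = e powr (1 / s) * Ph"
  have m0: "m0 > 0" using e market_facts by (simp add: m0_def)
  have m0s: "m0 powr s = e * Ph powr s"
    unfolding m0_def using e market_facts by (simp add: powr_mult powr_powr)
  define q1 where "q1 = th / m0 powr (1 - th)"
  have q1: "q1 > 0" "cap q1 = m0" using cap_inv[OF m0] market_facts m0 by (auto simp: q1_def)
  define q where "q = \<bar>B\<bar> + q_brk + 1 + q1 + c / e"
  have q: "B < q" "q_brk < q" "q1 \<le> q" "c / e \<le> q" "q > 0"
    using q_brk_pos q1 c e unfolding q_def by (smt (verit) divide_pos_pos)+
  have "c / q \<le> c / (c / e)" using q c e by (intro divide_left_mono) auto
  then have cq: "c / q \<le> e" using c e by simp
  have "cap q \<le> m0" using cap_le[OF q1(1) q(3)] q1 by simp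
  then have "cap q powr s \<le> e * Ph powr s"
    using cap_pos[OF q(5)] market_facts m0s by (metis less_imp_le powr_mono2)
  then show ?thesis using rev_slope_neg_criterion[OF q(5) e er cq] q by blast
qed

text \<open>Below the break point traffic is constant, so revenue strictly increases with q.\<close>

lemma rev_increasing_below_break:
  assumes q: "0 < q1" "q1 < q2" "q2 \<le> q_brk"
  shows "(q1 - c) * traffic q1 < (q2 - c) * traffic q2"
proof -
  have KH: "Kc * Hint Ph > 0" using Kc_pos Hint_pos[OF market_facts(3)] by simp
  have "(q1 - c) * (Kc * Hint Ph) < (q2 - c) * (Kc * Hint Ph)"
    using q KH by (intro mult_strict_right_mono) auto
  then show ?thesis using traffic_const q by simp
qed

text \<open>A price at which revenue is differentiable with negative derivative lies beyond
  the break point, since below it revenue increases with the price.\<close>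

lemma beyond_break_of_neg_deriv:
  assumes ka: "ka > 0" and P: "P > 0"
    and D: "(Rev M ka has_real_derivative D) (at P)" "D < 0"
  shows "q_brk < P * ka"
proof (rule ccontr)
  assume "\<not> q_brk < P * ka"
  then have le: "P * ka \<le> q_brk" by simp
  obtain d where d: "d > 0" "\<And>h. h > 0 \<Longrightarrow> h < d \<Longrightarrow> Rev M ka P < Rev M ka (P - h)"
    using DERIV_neg_dec_left[OF D] by blast
  define h where "h = min (d / 2) (P / 2)"
  have hh: "h > 0" "h < d" "P - h > 0" using d P by (auto simp: h_def)
  have "((P - h) * ka - meta M * ka) * traffic ((P - h) * ka) < (P * ka - meta M * ka) * traffic (P * ka)"
    using rev_increasing_below_break[of "(P - h) * ka" "P * ka"] hh ka le by simp
  then have "Rev M ka (P - h) < Rev M ka P" using Rev_eq[OF hh(3) ka] Rev_eq[OF P ka] by simp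
  then show False using d(2)[OF hh(1,2)] by linarith
qed

lemma rev_slope_root:
  assumes c: "0 < c" and q0: "0 < q0" "0 < rev_slope c q0"
  obtains qs where "q0 < qs" "rev_slope c qs = 0"
proof -
  obtain qL where qL: "q0 < qL" "rev_slope c qL < 0" using rev_slope_neg_large[OF c, of q0] by blast
  have "continuous_on {q0..qL} (rev_slope c)"
    using rev_slope_cont by (rule continuous_on_subset) (use q0 in auto)
  then obtain qs where qs: "q0 \<le> qs" "qs \<le> qL" "rev_slope c qs = 0"
    using IVT2'[of "rev_slope c" qL 0 q0] qL q0 by auto
  moreover have "qs \<noteq> q0" using qs q0 by auto
  ultimately show ?thesis using that[of qs] by linarith
qed

context
  fixes ka kp :: real
  assumes ka: "ka > 0" and kp: "kp > 0"
begin

lemma Feas_iff: "p \<in> Feas M ka kp \<longleftrightarrow> meta M < p \<and> kp * traffic (p * ka) \<le> mC M"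
proof
  assume p: "p \<in> Feas M ka kp"
  then have p0: "p > 0" "Rev M ka p > 0" "kp * Xtot M ka p \<le> mC M"
    by (auto simp: Feas_def Apeak_def)
  have "(p * ka - meta M * ka) * traffic (p * ka) > 0" using p0 Rev_eq[OF p0(1) ka] by simp
  moreover have "traffic (p * ka) > 0" using traffic_pos[of "p * ka"] p0 ka by simp
  ultimately have "p * ka - meta M * ka > 0" by (simp add: zero_less_mult_iff)
  then have "meta M < p" using ka by (simp add: algebra_simps)
  then show "meta M < p \<and> kp * traffic (p * ka) \<le> mC M" using p0 Xtot_eq[OF p0(1) ka] by simp
next
  assume p: "meta M < p \<and> kp * traffic (p * ka) \<le> mC M"
  then have p0: "p > 0" using market_facts by linarith
  have "p * ka - meta M * ka > 0" using p ka by (simp add: algebra_simps)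
  moreover have "traffic (p * ka) > 0" using traffic_pos[of "p * ka"] p0 ka by simp
  ultimately have "Rev M ka p > 0" using Rev_eq[OF p0 ka] by simp
  then show "p \<in> Feas M ka kp" using p p0 Xtot_eq[OF p0 ka] by (simp add: Feas_def Apeak_def)
qed

lemma Feas_up: "p \<in> Feas M ka kp \<Longrightarrow> p \<le> p' \<Longrightarrow> p' \<in> Feas M ka kp"
proof -
  assume p: "p \<in> Feas M ka kp" "p \<le> p'"
  then have h: "meta M < p" "kp * traffic (p * ka) \<le> mC M" using Feas_iff by auto
  have "traffic (p' * ka) \<le> traffic (p * ka)" using traffic_mono[of "p * ka" "p' * ka"] h market_facts ka p(2) by simp
  then have "kp * traffic (p' * ka) \<le> mC M" using h kp by (meson mult_left_mono less_imp_le order_trans)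
  then show ?thesis using Feas_iff h p(2) by auto
qed

lemma Feas_ne: "Feas M ka kp \<noteq> {}"
proof -
  define A where "A = Ph powr s"
  have A: "A > 0" using market_facts by (simp add: A_def)
  define m0 where "m0 = min Ph (mC M * s / (kp * Kc * A))"
  have m0: "0 < m0" "m0 \<le> Ph" "m0 \<le> mC M * s / (kp * Kc * A)"
    using market_facts A kp Kc_pos by (auto simp: m0_def)
  define q0 where "q0 = th / m0 powr (1 - th)"
  have q0: "q0 > 0" "cap q0 = m0" using cap_inv[OF m0(1)] market_facts m0 by (auto simp: q0_def)
  define p where "p = max (q0 / ka) (meta M + 1)"
  have "q0 / ka \<le> p" "meta M < p" by (auto simp: p_def)
  then have p: "meta M < p" "q0 \<le> p * ka" using ka by (auto simp: pos_divide_le_eq)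
  have "traffic (p * ka) \<le> traffic q0" using traffic_mono[OF q0(1) p(2)] .
  also have "traffic q0 = Kc * Hint m0" using q0 m0 by (simp add: traffic_def)
  also have "\<dots> \<le> Kc * (m0 * A / s)" unfolding A_def by (rule mult_left_mono[OF Hint_le_lin[OF m0(1)] less_imp_le[OF Kc_pos]])
  finally have "kp * traffic (p * ka) \<le> kp * (Kc * (m0 * A / s))" by (rule mult_left_mono) (use kp in simp)
  also have "\<dots> \<le> mC M"
  proof -
    have "m0 * (kp * Kc * A) \<le> mC M * s" using m0(3) kp Kc_pos A by (simp add: pos_le_divide_eq)
    then show ?thesis using market_facts(1) by (simp add: field_simps)
  qed
  finally show ?thesis using Feas_iff p by blast
qed

lemma Feas_bdd: "bdd_below (Feas M ka kp)"
  by (rule bdd_belowI[of _ "meta M"]) (simp add: Feas_iff)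

lemma p0_ge: "meta M \<le> p0 M ka kp"
  unfolding p0_def by (rule cInf_greatest[OF Feas_ne]) (simp add: Feas_iff)

lemma p0_lower: assumes "p \<in> Feas M ka kp" shows "p0 M ka kp \<le> p"
  unfolding p0_def by (rule cInf_lower[OF assms Feas_bdd])

lemma above_p0: "p0 M ka kp < p \<Longrightarrow> p \<in> Feas M ka kp"
  using cInf_lessD[OF Feas_ne, of p] Feas_up unfolding p0_def by (meson less_imp_le)

lemma p0_pos: "p0 M ka kp > 0" using p0_ge market_facts by linarith

lemma peak_isCont: "p > 0 \<Longrightarrow> isCont (\<lambda>p. kp * traffic (p * ka)) p"
proof -
  assume p: "p > 0"
  have "isCont (\<lambda>p. p * ka) p" by simp
  from isCont_o2[OF this traffic_isCont] p ka have "isCont (\<lambda>p. traffic (p * ka)) p" by simp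
  then show ?thesis by (rule isCont_mult[OF continuous_const])
qed

text \<open>A price above eta with slack in the capacity constraint is strictly above p0:
  by continuity, slightly smaller prices are still feasible.\<close>

lemma p0_lt_of_slack:
  assumes P: "meta M < P" and slack: "kp * traffic (P * ka) < mC M"
  shows "p0 M ka kp < P"
proof -
  have P0: "P > 0" using P market_facts by linarith
  obtain d where d: "d > 0" "\<And>y. \<bar>y - P\<bar> < d \<Longrightarrow> kp * traffic (y * ka) < mC M"
    using cont_nbhd_less[OF peak_isCont[OF P0] slack] by blast
  define y where "y = max (P - d / 2) ((P + meta M) / 2)"
  have y: "meta M < y" "y < P" "\<bar>y - P\<bar> < d"
    using P d unfolding y_def by (auto simp: less_max_iff_disj)
  have "y \<in> Feas M ka kp" using d(2)[OF y(3)] y Feas_iff by auto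
  then show ?thesis using p0_lower y by force
qed

lemma p0_in: "meta M < p0 M ka kp \<Longrightarrow> p0 M ka kp \<in> Feas M ka kp"
proof (rule ccontr)
  define P where "P = p0 M ka kp"
  assume h: "meta M < p0 M ka kp" "p0 M ka kp \<notin> Feas M ka kp"
  then have "mC M < kp * traffic (P * ka)" using Feas_iff P_def by auto
  then obtain d where d: "d > 0" "\<And>y. \<bar>y - P\<bar> < d \<Longrightarrow> mC M < kp * traffic (y * ka)"
    using cont_nbhd_greater[OF peak_isCont[OF p0_pos[folded P_def]]] by blast
  have "P + d / 2 \<in> Feas M ka kp" using above_p0 d P_def by simp
  then have "kp * traffic ((P + d / 2) * ka) \<le> mC M" using Feas_iff by auto
  moreover have "mC M < kp * traffic ((P + d / 2) * ka)" by (rule d(2)) (use d in simp)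
  ultimately show False by linarith
qed

lemma p0_sat: "meta M < p0 M ka kp \<Longrightarrow> kp * traffic (p0 M ka kp * ka) = mC M"
  using p0_in Feas_iff p0_lt_of_slack by (meson less_irrefl order_le_less)

text \<open>Opt-saturated regime: if the revenue slope is negative at the saturation price
  p0, revenue strictly decreases on the feasible ray, so p0 is the unique
  equilibrium price.\<close>

lemma sat_equilibrium:
  assumes h: "meta M < p0 M ka kp" "q_brk < p0 M ka kp * ka" "rev_slope (meta M * ka) (p0 M ka kp * ka) < 0"
  shows "p0 M ka kp \<in> Feas M ka kp"
    and "\<And>p. p \<in> Feas M ka kp \<Longrightarrow> p \<noteq> p0 M ka kp \<Longrightarrow> Rev M ka p < Rev M ka (p0 M ka kp)"
    and "\<And>p. is_eq_price M ka kp p \<longleftrightarrow> p = p0 M ka kp"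
proof -
  define P where "P = p0 M ka kp"
  define c where "c = meta M * ka"
  have c: "0 < c" "c < P * ka" using market_facts ka h by (auto simp: c_def P_def)
  show inF: "P \<in> Feas M ka kp" using p0_in h by (simp add: P_def)
  have strict: "Rev M ka p < Rev M ka P" if p: "p \<in> Feas M ka kp" "p \<noteq> P" for p
  proof -
    have "P < p" using p0_lower[OF p(1)] p(2) by (simp add: P_def)
    then show ?thesis
    proof (rule DERIV_neg_imp_decreasing)
      fix x assume x: "P \<le> x" "x \<le> p"
      have x0: "x > 0" using x p0_pos P_def by (meson less_le_trans)
      have xq: "q_brk < x * ka" using h x ka P_def by (meson le_less_trans less_le_trans mult_right_mono less_imp_le)
      have "rev_slope c (x * ka) < 0"
      proof (cases "x = P")
        case True then show ?thesis using h by (simp add: c_def P_def)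
      next
        case False
        then have "P * ka < x * ka" using x ka by simp
        then show ?thesis using rev_slope_single_crossing[of c "P * ka" "x * ka"] c h by (simp add: c_def P_def)
      qed
      then show "\<exists>y. DERIV (Rev M ka) x :> y \<and> y < 0"
        using Rev_deriv[OF ka x0 xq] ka by (intro exI[of _ "ka * rev_slope c (x * ka)"]) (simp add: c_def mult_pos_neg)
    qed
  qed
  then show "\<And>p. p \<in> Feas M ka kp \<Longrightarrow> p \<noteq> p0 M ka kp \<Longrightarrow> Rev M ka p < Rev M ka (p0 M ka kp)"
    by (simp add: P_def)
  then show "\<And>p. is_eq_price M ka kp p \<longleftrightarrow> p = p0 M ka kp"
    using eq_price_iff_unique_max[OF inF[unfolded P_def]] by blast
qed

lemma opt_sat_facts:
  assumes "opt_sat_cond M ka kp"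
  shows "meta M < p0 M ka kp \<and> q_brk < p0 M ka kp * ka \<and> rev_slope (meta M * ka) (p0 M ka kp * ka) < 0"
proof -
  define P where "P = p0 M ka kp"
  define c where "c = meta M * ka"
  obtain D where D: "(Rev M ka has_real_derivative D) (at P)" "D < 0"
    using assms unfolding opt_sat_cond_def P_def by blast
  have P0: "P > 0" using p0_pos P_def by simp
  have qb: "q_brk < P * ka" using beyond_break_of_neg_deriv[OF ka P0 D] .
  have "D = ka * rev_slope c (P * ka)" using DERIV_unique[OF D(1) Rev_deriv[OF ka P0 qb]] by (simp add: c_def)
  then have Dn: "rev_slope c (P * ka) < 0" using D(2) ka by (simp add: mult_less_0_iff)
  have "meta M < P"
  proof (rule ccontr)
    assume "\<not> meta M < P"
    then have "P * ka = c" using p0_ge P_def by (simp add: c_def)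
    moreover have "traffic_hi c > 0" using traffic_hi_pos[of c] qb P0 ka \<open>P * ka = c\<close> by (metis mult_pos_pos less_imp_le)
    ultimately show False using Dn by (simp add: rev_slope_self)
  qed
  then show ?thesis using qb Dn by (simp add: P_def c_def)
qed

lemma eq_price_at_root:
  assumes qs: "meta M * ka < qs" "q_brk < qs" "rev_slope (meta M * ka) qs = 0" "p0 M ka kp * ka < qs"
  shows "is_eq_price M ka kp p \<longleftrightarrow> p = qs / ka"
proof -
  define c where "c = meta M * ka"
  have c0: "c > 0" using market_facts ka by (simp add: c_def)
  have qsc: "c < qs" "q_brk < qs" "rev_slope c qs = 0" using qs by (simp_all add: c_def)
  have qsF: "qs / ka \<in> Feas M ka kp" using above_p0 qs ka by (simp add: pos_less_divide_eq)
  have R: "Rev M ka q = (q * ka - c) * traffic (q * ka)" if "q \<in> Feas M ka kp" for q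
    using Rev_eq[of q ka] that Feas_iff market_facts ka by (simp add: c_def)
  have less: "Rev M ka q < Rev M ka (qs / ka)" if "q \<in> Feas M ka kp" "q \<noteq> qs / ka" for q
  proof -
    have "q > 0" using that Feas_iff market_facts by (meson less_trans)
    then have "(q * ka - c) * traffic (q * ka) < (qs - c) * traffic qs"
      using rev_unique_max[OF c0 qsc, of "q * ka"] that ka by (auto simp: field_simps)
    then show ?thesis using R[OF that(1)] R[OF qsF] ka by simp
  qed
  show ?thesis using eq_price_iff_unique_max[OF qsF less] by blast
qed

lemma opt_unsat_equilibrium:
  assumes "opt_unsat_cond M ka kp"
  shows "\<exists>qs. meta M * ka < qs \<and> q_brk < qs \<and> rev_slope (meta M * ka) qs = 0 \<and>
           (\<forall>p. is_eq_price M ka kp p \<longleftrightarrow> p = qs / ka)"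
proof -
  define P where "P = p0 M ka kp"
  define c where "c = meta M * ka"
  have c0: "c > 0" using market_facts ka by (simp add: c_def)
  obtain D where D: "(Rev M ka has_real_derivative D) (at P)" "D > 0"
    using assms unfolding opt_unsat_cond_def P_def by blast
  have P0: "P > 0" using p0_pos P_def by simp
  define q0 where "q0 = max (P * ka) q_brk"
  have q0: "q0 > 0" "c \<le> q0" using q_brk_pos p0_ge ka
    by (auto simp: q0_def c_def P_def less_max_iff_disj le_max_iff_disj)
  have "rev_slope c q0 > 0"
  proof (cases "q_brk < P * ka")
    case True
    then have "D = ka * rev_slope c (P * ka)"
      using DERIV_unique[OF D(1) Rev_deriv[OF ka P0 True]] by (simp add: c_def)
    then show ?thesis using True D(2) ka by (simp add: q0_def zero_less_mult_iff)
  next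
    case False
    then show ?thesis using rev_slope_q_brk traffic_hi_pos[OF q_brk_pos] by (simp add: q0_def)
  qed
  then obtain qs where qs: "q0 < qs" "rev_slope c qs = 0" using rev_slope_root[OF c0 q0(1)] by blast
  then have "c < qs" "q_brk < qs" "P * ka < qs" using q0 by (auto simp: q0_def)
  then show ?thesis using eq_price_at_root qs by (auto simp: c_def P_def)
qed

end

definition "opt_util q x = (min x (cap q)) powr th - q * min x (cap q)"

text \<open>Since the temporal weights sum to one, the model's equilibrium net-utility of a
  user is opt_util evaluated at the payment per unit traffic.\<close>

lemma user_util_eq:
  assumes p: "p > 0" and ka: "ka > 0" and x: "0 \<le> x"
  shows "user_util M ka p x = opt_util (p * ka) x"
proof -
  define mu where "mu = min x (cap (p * ka))"
  have mu: "mu \<ge> 0" using cap_pos[of "p * ka"] p ka x by (simp add: mu_def)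
  have xo: "xopt M ka p x t = mw M t * mu" for t by (simp add: xopt_def mu_def cap_def th_def)
  have "(\<Sum>t\<in>mT M. mw M t powr (1 - th) * xopt M ka p x t powr th) = (\<Sum>t\<in>mT M. mw M t * mu powr th)"
  proof (rule sum.cong[OF refl])
    fix t assume t: "t \<in> mT M"
    then have w: "mw M t > 0" using market_facts by simp
    have "mw M t powr (1 - th) * (mw M t * mu) powr th = mw M t powr (1 - th) * (mw M t powr th * mu powr th)"
      using w mu by (simp add: powr_mult)
    also have "\<dots> = (mw M t powr (1 - th) * mw M t powr th) * mu powr th" by simp
    also have "mw M t powr (1 - th) * mw M t powr th = mw M t" using w by (simp add: powr_add[symmetric])
    finally show "mw M t powr (1 - th) * xopt M ka p x t powr th = mw M t * mu powr th" by (simp add: xo)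
  qed
  also have "\<dots> = mu powr th" using market_facts by (simp add: sum_distrib_right[symmetric])
  finally have s1: "(\<Sum>t\<in>mT M. mw M t powr (1 - th) * xopt M ka p x t powr th) = mu powr th" .
  have s2: "(\<Sum>t\<in>mT M. xopt M ka p x t) = mu" using market_facts by (simp add: xo sum_distrib_right[symmetric])
  show ?thesis unfolding user_util_def netutil_def th_def[symmetric] s1 s2 opt_util_def mu_def
    by (simp add: mult.assoc)
qed

text \<open>z^theta - q z increases up to cap q and decreases after it, so it is maximised
  over [0, x] at min(x, cap q); hence optimal utility strictly decreases in q.\<close>

lemma gain_unimodal:
  assumes q: "q > 0" and ab: "0 \<le> a" "a \<le> b"
  shows "b \<le> cap q \<Longrightarrow> a powr th - q * a \<le> b powr th - q * b"
    and "cap q \<le> a \<Longrightarrow> b powr th - q * b \<le> a powr th - q * a"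
proof -
  define m where "m = cap q"
  have m: "m > 0" using cap_pos[OF q] by (simp add: m_def)
  have mth: "th * m powr (th - 1) = q"
  proof -
    have "m powr (th - 1) = (th / q) powr (1 / (1 - th) * (th - 1))"
      by (simp add: m_def cap_def powr_powr)
    also have "1 / (1 - th) * (th - 1) = -1" using market_facts by (simp add: field_simps)
    also have "(th / q) powr (-1) = q / th" using market_facts q by (simp add: powr_minus_divide)
    finally show ?thesis using market_facts by simp
  qed
  have cont: "continuous_on {a..b} (\<lambda>z. z powr th - q * z)"
    by (intro continuous_intros continuous_on_powr') (use ab market_facts in auto)
  have der: "DERIV (\<lambda>z. z powr th - q * z) z :> th * z powr (th - 1) - q" if "z > 0" for z
    using DERIV_diff[OF has_real_derivative_powr[OF that, of th] DERIV_cmult_Id[of q z]] by simp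
  show "a powr th - q * a \<le> b powr th - q * b" if bm: "b \<le> cap q"
  proof (rule DERIV_nonneg_imp_increasing_open[OF ab(2) _ cont])
    fix z assume z: "a < z" "z < b"
    then have z0: "z > 0" using ab by simp
    have "m powr (th - 1) \<le> z powr (th - 1)" using z z0 bm market_facts unfolding m_def
      by (intro powr_mono2') auto
    then have "th * z powr (th - 1) - q \<ge> 0" using mth market_facts by (smt (verit) mult_left_mono)
    then show "\<exists>y. DERIV (\<lambda>z. z powr th - q * z) z :> y \<and> y \<ge> 0" using der[OF z0] by blast
  qed
  show "b powr th - q * b \<le> a powr th - q * a" if am: "cap q \<le> a"
  proof (rule DERIV_nonpos_imp_decreasing_open[OF ab(2) _ cont])
    fix z assume z: "a < z" "z < b"
    then have z0: "z > 0" using am m m_def by simp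
    have "z powr (th - 1) \<le> m powr (th - 1)" using z am m market_facts unfolding m_def
      by (intro powr_mono2') auto
    then have "th * z powr (th - 1) - q \<le> 0" using mth market_facts by (smt (verit) mult_left_mono)
    then show "\<exists>y. DERIV (\<lambda>z. z powr th - q * z) z :> y \<and> y \<le> 0" using der[OF z0] by blast
  qed
qed

lemma gain_le_opt_util:
  assumes q: "q > 0" and z: "0 \<le> z" "z \<le> x"
  shows "z powr th - q * z \<le> opt_util q x"
proof (cases "z \<le> min x (cap q)")
  case True
  then show ?thesis using gain_unimodal(1)[OF q z(1) True] by (simp add: opt_util_def)
next
  case False
  then have e: "min x (cap q) = cap q" "cap q < z" using z by auto
  show ?thesis using gain_unimodal(2)[of q "cap q" z] e q cap_pos[OF q] by (simp add: opt_util_def)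
qed

lemma opt_util_strict:
  assumes q: "0 < q1" "q1 < q2" and x: "x > 0"
  shows "opt_util q2 x < opt_util q1 x"
proof -
  define mu where "mu = min x (cap q2)"
  have mu: "mu > 0" "mu \<le> x" using cap_pos[of q2] q x by (auto simp: mu_def)
  have "opt_util q2 x = mu powr th - q2 * mu" by (simp add: opt_util_def mu_def)
  also have "\<dots> < mu powr th - q1 * mu" using q mu by simp
  also have "\<dots> \<le> opt_util q1 x" using gain_le_opt_util[OF q(1) _ mu(2)] mu by simp
  finally show ?thesis .
qed

text \<open>Integrability of the utility against the demand density: near 0 the integrand
  is an integrable power, away from 0 it is continuous.\<close>

lemma opt_util_cont: assumes q: "q > 0" shows "continuous_on {0..} (opt_util q)"
proof -
  have f: "continuous_on {0..} (\<lambda>x. min x (cap q))" by (intro continuous_intros)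
  have "\<forall>x\<in>{0..}. min x (cap q) \<ge> 0 \<and> (min x (cap q) = 0 \<longrightarrow> th > 0)" using cap_pos[OF q] market_facts by auto
  then have "continuous_on {0..} (\<lambda>x. min x (cap q) powr th)" by (rule continuous_on_powr'[OF f continuous_on_const])
  then show ?thesis unfolding opt_util_def[abs_def] by (intro continuous_on_diff continuous_on_mult continuous_on_const f)
qed

lemma opt_util_dens_cont:
  assumes q: "q > 0" and a: "0 < a"
  shows "continuous_on {a..Ph} (\<lambda>x. opt_util q x * dens M x)"
proof -
  have "continuous_on {a..Ph} (\<lambda>x. opt_util q x * (x powr (-(1 - s)) / Zc M))"
    using continuous_on_subset[OF opt_util_cont[OF q], of "{a..Ph}"] a market_facts
    by (intro continuous_intros continuous_on_powr') auto
  moreover have "dens M x = x powr (-(1 - s)) / Zc M" if "x \<in> {a..Ph}" for x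
    using that a by (simp add: dens_def Ph_def s_def)
  ultimately show ?thesis by (metis (no_types, lifting) continuous_on_cong)
qed

lemma opt_util_dens_small:
  assumes q: "q > 0" and x: "0 \<le> x" "x \<le> cap q" "x \<le> Ph"
  shows "opt_util q x * dens M x = (x powr (th - (1 - s)) - q * x powr s) / Zc M"
proof (cases "x = 0")
  case True then show ?thesis using market_facts by (simp add: opt_util_def dens_def)
next
  case False
  then have x0: "x > 0" using x by simp
  have "(x powr th - q * x) * x powr (-(1 - s)) = x powr (th - (1 - s)) - q * x powr s"
  proof -
    have "x powr th * x powr (-(1 - s)) = x powr (th - (1 - s))" by (simp only: diff_conv_add_uminus powr_add)
    moreover have "x * x powr (-(1 - s)) = x powr s" using x0 by (simp add: powr_mult_base)
    ultimately show ?thesis by (simp add: left_diff_distrib mult.assoc)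
  qed
  then show ?thesis using x by (simp add: opt_util_def dens_eq min_absorb1)
qed

lemma opt_util_integrable:
  assumes q: "q > 0"
  shows "(\<lambda>x. opt_util q x * dens M x) integrable_on {0..Ph}"
proof -
  define v where "v = min (cap q) Ph"
  have v: "0 < v" "v \<le> Ph" "v \<le> cap q" using cap_pos[OF q] market_facts by (auto simp: v_def)
  have "(\<lambda>x. x powr (th - (1 - s))) integrable_on {0..v}"
    using integrable_on_powr_from_0[of "th - (1 - s)" v] market_facts v by simp
  moreover have "(\<lambda>x. q * x powr s) integrable_on {0..v}"
    using integrable_on_cmult_left[OF integrable_on_powr_from_0[of s v], of q] market_facts v by simp
  ultimately have "(\<lambda>x. x powr (th - (1 - s)) - q * x powr s) integrable_on {0..v}"
    by (rule integrable_diff)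
  then have low: "(\<lambda>x. (x powr (th - (1 - s)) - q * x powr s) / Zc M) integrable_on {0..v}"
    by (rule integrable_on_divide)
  have "(\<lambda>x. opt_util q x * dens M x) integrable_on {0..v}
      \<longleftrightarrow> (\<lambda>x. (x powr (th - (1 - s)) - q * x powr s) / Zc M) integrable_on {0..v}"
    by (rule integrable_cong) (use opt_util_dens_small[OF q] v in auto)
  then have int1: "(\<lambda>x. opt_util q x * dens M x) integrable_on {0..v}" using low by simp
  have int2: "(\<lambda>x. opt_util q x * dens M x) integrable_on {v..Ph}"
    using integrable_continuous_interval[OF opt_util_dens_cont[OF q v(1)]] .
  show ?thesis using Henstock_Kurzweil_Integration.integrable_combine[OF _ v(2) int1 int2] v by simp
qed

lemma usurplus_eq:
  assumes "p > 0" "ka > 0"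
  shows "usurplus M ka p = mN M * integral {0..Ph} (\<lambda>x. opt_util (p * ka) x * dens M x)"
  unfolding usurplus_def Ph_def[symmetric]
  using user_util_eq[OF assms] by (intro arg_cong[where f="\<lambda>t. mN M * t"] integral_cong) auto

lemma usurplus_strict:
  assumes q: "0 < q1" "q1 < q2"
  shows "integral {0..Ph} (\<lambda>x. opt_util q2 x * dens M x) < integral {0..Ph} (\<lambda>x. opt_util q1 x * dens M x)"
proof -
  have q2: "q2 > 0" using q by simp
  define d where "d x = opt_util q1 x * dens M x - opt_util q2 x * dens M x" for x
  have d_eq: "d x = (opt_util q1 x - opt_util q2 x) * dens M x" for x by (simp add: d_def left_diff_distrib)
  have d_pos: "0 < d x" if "0 < x" "x \<le> Ph" for x
    using opt_util_strict[OF q that(1)] that market_facts by (simp add: d_eq dens_def Ph_def)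
  have h: "0 \<le> Ph / 2" "Ph / 2 < Ph" using market_facts by auto
  have "0 < integral {0..Ph} d"
  proof (rule integral_pos_of_pos_tail[OF _ h])
    show "d integrable_on {0..Ph}" unfolding d_def by (intro integrable_diff opt_util_integrable q q2)
    show "continuous_on {Ph / 2..Ph} d" unfolding d_def
      using market_facts by (intro continuous_on_diff opt_util_dens_cont q q2) auto
    show "0 \<le> d x" if "x \<in> {0..Ph}" for x
      using that d_pos[of x] by (cases "x = 0") (auto simp: d_def dens_def)
    show "0 < d x" if "x \<in> {Ph / 2<..<Ph}" for x using that h d_pos[of x] by auto
  qed
  moreover have "integral {0..Ph} d = integral {0..Ph} (\<lambda>x. opt_util q1 x * dens M x)
      - integral {0..Ph} (\<lambda>x. opt_util q2 x * dens M x)"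
    unfolding d_def by (rule integral_diff) (intro opt_util_integrable q q2)+
  ultimately show ?thesis by linarith
qed

text \<open>The saturating load: the value of kappa_peak for which the cell is exactly
  saturated at price p.  Beyond the break point (and above eta) it is a continuous,
  strictly increasing, differentiable function of p whose inverse is p0.\<close>

definition "sat_load ka p = mC M / traffic (p * ka)"

lemma p0_sat_load:
  assumes ka: "ka > 0" and z: "meta M < z" "q_brk < z * ka"
  shows "p0 M ka (sat_load ka z) = z"
proof -
  have z0: "z > 0" using z market_facts by linarith
  have Gz: "traffic (z * ka) > 0" using traffic_pos[of "z * ka"] z0 ka by simp
  define k where "k = sat_load ka z"
  have k: "k > 0" using Gz market_facts by (simp add: k_def sat_load_def)
  have fits: "k * traffic (p * ka) \<le> mC M \<longleftrightarrow> traffic (p * ka) \<le> traffic (z * ka)" for p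
    using Gz market_facts by (simp add: k_def sat_load_def field_simps)
  have "Feas M ka k = {z..}"
  proof (intro set_eqI iffI)
    fix p assume "p \<in> Feas M ka k"
    then have p: "meta M < p" "traffic (p * ka) \<le> traffic (z * ka)" using Feas_iff[OF ka k] fits by auto
    then show "p \<in> {z..}"
      using traffic_strict[of "p * ka" "z * ka"] ka z market_facts
      by (cases "p < z") (auto simp: mult_strict_right_mono)
  next
    fix p assume "p \<in> {z..}"
    then have "traffic (p * ka) \<le> traffic (z * ka)"
      using traffic_mono[of "z * ka" "p * ka"] z0 ka by (simp add: mult_right_mono)
    then show "p \<in> Feas M ka k" using Feas_iff[OF ka k] fits \<open>p \<in> {z..}\<close> z by auto
  qed
  then show ?thesis by (simp add: p0_def k_def)
qed

lemma sat_load_cont: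
  assumes ka: "ka > 0"
  shows "continuous_on {0<..} (sat_load ka)"
proof -
  have "continuous_on {0<..} (\<lambda>p. traffic (p * ka))"
  proof (rule continuous_on_compose2[OF traffic_cont])
    show "continuous_on {0<..} (\<lambda>p. p * ka)" by (intro continuous_intros)
  qed (use ka in auto)
  moreover have "\<forall>p\<in>{0<..}. traffic (p * ka) \<noteq> 0" using traffic_pos ka by (metis mult_pos_pos less_irrefl greaterThan_iff)
  ultimately show ?thesis unfolding sat_load_def[abs_def] by (intro continuous_intros) auto
qed

lemma sat_load_deriv:
  assumes ka: "ka > 0" and z: "z > 0" "q_brk < z * ka"
  shows "\<exists>f'>0. (sat_load ka has_real_derivative f') (at z)"
proof -
  define f' where "f' = - (mC M * (dtraffic_hi (z * ka) * ka)) / (traffic_hi (z * ka))^2"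
  have Gz: "traffic_hi (z * ka) > 0" using traffic_hi_pos[of "z * ka"] z ka by simp
  have "mC M * (dtraffic_hi (z * ka) * ka) < 0"
    using dtraffic_hi_neg[OF z(2)] market_facts ka by (simp add: mult_pos_neg mult_neg_pos)
  then have f'pos: "f' > 0" using Gz by (simp add: f'_def divide_neg_pos)
  have d1: "((\<lambda>p. traffic_hi (p * ka)) has_real_derivative dtraffic_hi (z * ka) * ka) (at z)"
    using DERIV_chain2[OF traffic_hi_deriv DERIV_cmult_Id[of ka z]] z ka by (simp add: mult.commute)
  have "((\<lambda>p. mC M / traffic_hi (p * ka)) has_real_derivative f') (at z)"
    using DERIV_divide[OF DERIV_const d1, of "mC M"] Gz by (simp add: f'_def power2_eq_square)
  then have "(sat_load ka has_real_derivative f') (at z)"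
  proof (rule has_field_derivative_transform_within_open[where S="{q_brk / ka<..}"])
    show "z \<in> {q_brk / ka<..}" using z ka by (simp add: pos_divide_less_eq)
    fix x assume "x \<in> {q_brk / ka<..}"
    then have "q_brk < x * ka" using ka by (simp add: pos_divide_less_eq)
    then show "mC M / traffic_hi (x * ka) = sat_load ka x"
      using traffic_eq_hi[of "x * ka"] q_brk_pos by (simp add: sat_load_def)
  qed simp
  then show ?thesis using f'pos by blast
qed

text \<open>Opt-saturated regime: the equilibrium price p0, as a function of kappa_peak,
  is differentiable with positive derivative (inverse function theorem applied to
  the saturating load).\<close>

lemma p0_deriv_kpeak:
  assumes ka: "0 < ka" and kp: "0 < kp" and h: "meta M < p0 M ka kp" "q_brk < p0 M ka kp * ka"
  shows "\<exists>D>0. ((\<lambda>k. p0 M ka k) has_real_derivative D) (at kp)"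
proof -
  define P0 where "P0 = p0 M ka kp"
  define S where "S = {max (meta M) (q_brk / ka)<..}"
  have inS: "z \<in> S \<longleftrightarrow> meta M < z \<and> q_brk < z * ka" for z
    using ka by (simp add: S_def pos_divide_less_eq)
  have Spos: "z \<in> S \<Longrightarrow> z > 0" for z using inS market_facts by (meson less_trans)
  have P0S: "P0 \<in> S" using inS h by (simp add: P0_def)
  obtain f' where f': "f' > 0" "(sat_load ka has_real_derivative f') (at P0)"
    using sat_load_deriv[OF ka Spos[OF P0S]] P0S inS by blast
  have load: "sat_load ka P0 = kp"
    using p0_sat[OF ka kp h(1)] kp traffic_pos[of "P0 * ka"] Spos[OF P0S] ka
    by (simp add: sat_load_def P0_def field_simps)
  have "((\<lambda>k. p0 M ka k) has_derivative (\<lambda>h. inverse f' * h)) (at (sat_load ka P0))"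
  proof (rule has_derivative_inverse_strong[of S P0 "sat_load ka"])
    show "open S" "P0 \<in> S" using P0S by (simp_all add: S_def)
    show "continuous_on S (sat_load ka)"
      using sat_load_cont[OF ka] by (rule continuous_on_subset) (use Spos in auto)
    show "\<And>z. z \<in> S \<Longrightarrow> p0 M ka (sat_load ka z) = z" using p0_sat_load[OF ka] inS by simp
    show "(sat_load ka has_derivative (\<lambda>h. f' * h)) (at P0)"
      using f'(2) by (simp add: has_field_derivative_def)
    show "(\<lambda>h. f' * h) \<circ> (\<lambda>h. inverse f' * h) = id" using f'(1) by (auto simp: fun_eq_iff)
  qed
  then have "((\<lambda>k. p0 M ka k) has_real_derivative inverse f') (at kp)"
    using load by (simp add: has_field_derivative_def)
  moreover have "inverse f' > 0" using f'(1) by simp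
  ultimately show ?thesis by blast
qed

text \<open>In the opt-saturated regime the equilibrium price is p0.  The conditions
  characterising the regime are open in kappa_peak, so near kp the equilibrium price
  is p0 as well.\<close>

lemma eq_price_sat:
  assumes ka: "0 < ka" and kp: "0 < kp"
    and h: "meta M < p0 M ka kp" "q_brk < p0 M ka kp * ka" "rev_slope (meta M * ka) (p0 M ka kp * ka) < 0"
  shows "eq_price M ka kp = p0 M ka kp"
  unfolding eq_price_def using sat_equilibrium(3)[OF ka kp h] by (intro the_equality) auto

lemma eq_price_near_sat:
  assumes ka: "0 < ka" and kp: "0 < kp" and os: "opt_sat_cond M ka kp"
    and cP: "isCont (\<lambda>k. p0 M ka k) kp"
  shows "eventually (\<lambda>k. eq_price M ka k = p0 M ka k) (nhds kp)"
proof -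
  define P where "P = (\<lambda>k. p0 M ka k)"
  have h: "meta M < P kp" "q_brk < P kp * ka" "rev_slope (meta M * ka) (P kp * ka) < 0"
    using opt_sat_facts[OF ka kp os] by (auto simp: P_def)
  have cP2: "isCont (\<lambda>k. P k * ka) kp" using cP by (intro continuous_intros) (simp add: P_def)
  have "P kp * ka > 0" using h q_brk_pos by linarith
  then have cP3: "isCont (\<lambda>k. rev_slope (meta M * ka) (P k * ka)) kp"
    using isCont_o2[OF cP2 rev_slope_isCont] by simp
  obtain d1 where d1: "d1 > 0" "\<And>y. \<bar>y - kp\<bar> < d1 \<Longrightarrow> meta M < P y"
    using cont_nbhd_greater[OF cP, of "meta M"] h by (auto simp: P_def)
  obtain d2 where d2: "d2 > 0" "\<And>y. \<bar>y - kp\<bar> < d2 \<Longrightarrow> q_brk < P y * ka"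
    using cont_nbhd_greater[OF cP2, of q_brk] h by auto
  obtain d3 where d3: "d3 > 0" "\<And>y. \<bar>y - kp\<bar> < d3 \<Longrightarrow> rev_slope (meta M * ka) (P y * ka) < 0"
    using cont_nbhd_less[OF cP3, of 0] h by auto
  define d where "d = min kp (min d1 (min d2 d3))"
  have d: "d > 0" using d1 d2 d3 kp by (simp add: d_def)
  show ?thesis unfolding eventually_nhds_metric
  proof (intro exI[of _ d] conjI allI impI)
    fix y assume "dist y kp < d"
    then have y: "\<bar>y - kp\<bar> < d" by (simp add: dist_real_def)
    have y0: "y > 0" using y by (simp add: d_def abs_less_iff)
    show "eq_price M ka y = p0 M ka y"
      using eq_price_sat[OF ka y0] d1(2)[of y] d2(2)[of y] d3(2)[of y] y by (simp add: d_def P_def)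
  qed (rule d)
qed

lemma eq_revenue_deriv_kpeak:
  assumes ka: "0 < ka" and kp: "0 < kp" and os: "opt_sat_cond M ka kp"
  shows "\<exists>D. ((\<lambda>k. Rev M ka (eq_price M ka k)) has_real_derivative D) (at kp) \<and> D < 0"
proof -
  define P0 where "P0 = p0 M ka kp"
  have h: "meta M < P0" "q_brk < P0 * ka" "rev_slope (meta M * ka) (P0 * ka) < 0"
    using opt_sat_facts[OF ka kp os] by (auto simp: P0_def)
  have P00: "P0 > 0" using h market_facts by linarith
  obtain D' where D': "D' > 0" "((\<lambda>k. p0 M ka k) has_real_derivative D') (at kp)"
    using p0_deriv_kpeak[OF ka kp h(1,2)[unfolded P0_def]] by blast
  have dR: "((\<lambda>k. Rev M ka (p0 M ka k)) has_real_derivative (ka * rev_slope (meta M * ka) (P0 * ka)) * D') (at kp)"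
    using DERIV_chain2[OF Rev_deriv[OF ka P00 h(2), unfolded P0_def] D'(2)] by (simp add: P0_def)
  have "((\<lambda>k. Rev M ka (eq_price M ka k)) has_real_derivative (ka * rev_slope (meta M * ka) (P0 * ka)) * D') (at kp)"
  proof -
    have "eventually (\<lambda>k. Rev M ka (eq_price M ka k) = Rev M ka (p0 M ka k)) (nhds kp)"
      using eq_price_near_sat[OF ka kp os DERIV_isCont[OF D'(2)]] by (rule eventually_mono) simp
    from DERIV_cong_ev[OF refl this refl] show ?thesis using dR by simp
  qed
  moreover have "(ka * rev_slope (meta M * ka) (P0 * ka)) * D' < 0"
    using h ka D'(1) by (simp add: mult_neg_pos mult_pos_neg)
  ultimately show ?thesis by blast
qed

text \<open>Part (i), comparison: a smaller kappa_peak allows more traffic, so the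
  saturation price p0 strictly decreases.\<close>

lemma p0_strict_mono_kpeak:
  assumes ka: "0 < ka" and k: "0 < k1" "k1 < k2" and h2: "meta M < p0 M ka k2"
  shows "p0 M ka k1 < p0 M ka k2"
proof -
  define P2 where "P2 = p0 M ka k2"
  have k2: "0 < k2" using k by simp
  have P20: "P2 > 0" using p0_pos[OF ka k2] by (simp add: P2_def)
  have "k2 * traffic (P2 * ka) = mC M" using p0_sat[OF ka k2 h2] by (simp add: P2_def)
  moreover have "traffic (P2 * ka) > 0" using traffic_pos[of "P2 * ka"] P20 ka by simp
  ultimately have "k1 * traffic (P2 * ka) < mC M" using k(2) by (metis mult_strict_right_mono)
  then show ?thesis using p0_lt_of_slack[OF ka k(1)] h2 by (simp add: P2_def)
qed

lemma saturated_regime: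
  assumes ka: "0 < ka" and k: "0 < k1" "k1 < k2"
    and os1: "opt_sat_cond M ka k1" and os2: "opt_sat_cond M ka k2"
  shows "(\<exists>p. is_eq_price M ka k1 p) \<and> (\<exists>p. is_eq_price M ka k2 p) \<and>
       (\<forall>p1 p2. is_eq_price M ka k1 p1 \<and> is_eq_price M ka k2 p2 \<longrightarrow>
          p1 < p2 \<and>
          (\<forall>Phi\<in>{0<..mPhimax M}. user_util M ka p2 Phi < user_util M ka p1 Phi) \<and>
          Rev M ka p2 < Rev M ka p1 \<and>
          usurplus M ka p2 < usurplus M ka p1 \<and>
          welfare M ka p2 < welfare M ka p1)"
proof -
  have k2: "0 < k2" using k by simp
  define P1 where "P1 = p0 M ka k1"
  define P2 where "P2 = p0 M ka k2"
  have h1: "meta M < P1" "q_brk < P1 * ka" "rev_slope (meta M * ka) (P1 * ka) < 0"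
    using opt_sat_facts[OF ka k(1) os1] by (auto simp: P1_def)
  have h2: "meta M < P2" "q_brk < P2 * ka" "rev_slope (meta M * ka) (P2 * ka) < 0"
    using opt_sat_facts[OF ka k2 os2] by (auto simp: P2_def)
  note eq1 = sat_equilibrium[OF ka k(1) h1[unfolded P1_def]]
  note eq2 = sat_equilibrium[OF ka k2 h2[unfolded P2_def]]
  have P0s: "P1 > 0" "P2 > 0" using h1 h2 market_facts by linarith+
  have P12: "P1 < P2" using p0_strict_mono_kpeak[OF ka k h2(1)[unfolded P2_def]] by (simp add: P1_def P2_def)
  have q12: "0 < P1 * ka" "P1 * ka < P2 * ka" using P12 P0s ka by auto
  have P2F: "P2 \<in> Feas M ka k1" using above_p0[OF ka k(1)] P12 by (simp add: P1_def)
  have U: "\<forall>Phi\<in>{0<..mPhimax M}. user_util M ka P2 Phi < user_util M ka P1 Phi"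
    using user_util_eq[OF P0s(1) ka] user_util_eq[OF P0s(2) ka] opt_util_strict[OF q12] by auto
  have R: "Rev M ka P2 < Rev M ka P1" using eq1(2)[OF P2F] P12 by (simp add: P1_def)
  have US: "usurplus M ka P2 < usurplus M ka P1"
    using usurplus_eq[OF P0s(1) ka] usurplus_eq[OF P0s(2) ka] usurplus_strict[OF q12] market_facts by simp
  have W: "welfare M ka P2 < welfare M ka P1" using R US by (simp add: welfare_def)
  show ?thesis using eq1(3) eq2(3) P12 U R US W by (auto simp: P1_def P2_def)
qed

text \<open>Part (ii), key step: the root of the revenue slope grows with the cost
  c = eta * kappa_avg, because the slope decreases in c above the break point.\<close>

lemma rev_slope_root_mono:
  assumes c: "0 < c1" "c1 < c2" and q1: "q_brk < q1" "rev_slope c1 q1 = 0"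
    and q2: "c2 < q2" "q_brk < q2" "rev_slope c2 q2 = 0"
  shows "q1 < q2"
proof (rule ccontr)
  assume "\<not> q1 < q2"
  have "rev_slope c2 q1 = rev_slope c1 q1 + (c1 - c2) * dtraffic_hi q1"
    by (simp add: rev_slope_def algebra_simps)
  moreover have "(c1 - c2) * dtraffic_hi q1 > 0" using c dtraffic_hi_neg[OF q1(1)] by (simp add: mult_neg_neg)
  ultimately have pos: "rev_slope c2 q1 > 0" using q1 by simp
  then have "q2 < q1" using \<open>\<not> q1 < q2\<close> q2 by (cases "q1 = q2") auto
  then have "rev_slope c2 q1 < 0" using rev_slope_single_crossing[of c2 q2 q1] c q2 by simp
  then show False using pos by simp
qed

text \<open>Part (ii): as kappa_avg decreases, the equilibrium payment per unit traffic
  decreases, so every user gains; revenue (the cost share drops), user surplus and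
  welfare increase.\<close>

lemma unsaturated_regime:
  assumes kp: "0 < kp" and a: "0 < a1" "a1 < a2"
    and u1: "opt_unsat_cond M a1 kp" and u2: "opt_unsat_cond M a2 kp"
  shows "(\<exists>p. is_eq_price M a1 kp p) \<and> (\<exists>p. is_eq_price M a2 kp p) \<and>
       (\<forall>p1 p2. is_eq_price M a1 kp p1 \<and> is_eq_price M a2 kp p2 \<longrightarrow>
          p1 * a1 < p2 * a2 \<and>
          (\<forall>Phi\<in>{0<..mPhimax M}. user_util M a2 p2 Phi < user_util M a1 p1 Phi) \<and>
          Rev M a2 p2 < Rev M a1 p1 \<and>
          usurplus M a2 p2 < usurplus M a1 p1 \<and>
          welfare M a2 p2 < welfare M a1 p1)"
proof -
  have a2: "0 < a2" using a by simp
  obtain q1 where q1: "meta M * a1 < q1" "q_brk < q1" "rev_slope (meta M * a1) q1 = 0"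
      "\<And>p. is_eq_price M a1 kp p \<longleftrightarrow> p = q1 / a1"
    using opt_unsat_equilibrium[OF a(1) kp u1] by blast
  obtain q2 where q2: "meta M * a2 < q2" "q_brk < q2" "rev_slope (meta M * a2) q2 = 0"
      "\<And>p. is_eq_price M a2 kp p \<longleftrightarrow> p = q2 / a2"
    using opt_unsat_equilibrium[OF a2 kp u2] by blast
  have c: "0 < meta M * a1" "meta M * a1 < meta M * a2" using a market_facts by auto
  have q12: "q1 < q2" using rev_slope_root_mono[OF c q1(2,3) q2(1-3)] .
  have q10: "0 < q1" using q1 q_brk_pos by simp
  have p1: "q1 / a1 > 0" "q1 / a1 * a1 = q1" using q10 a by auto
  have p2: "q2 / a2 > 0" "q2 / a2 * a2 = q2" using q10 q12 a2 by auto
  have U: "\<forall>Phi\<in>{0<..mPhimax M}. user_util M a2 (q2 / a2) Phi < user_util M a1 (q1 / a1) Phi"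
    using user_util_eq[OF p1(1) a(1)] user_util_eq[OF p2(1) a2] opt_util_strict[OF q10 q12] p1 p2 by auto
  have "kp * traffic q2 \<le> mC M"
    using q2(4) Feas_iff[OF a2 kp, of "q2 / a2"] p2 unfolding is_eq_price_def by auto
  moreover have "meta M < q2 / a1" using q2(1) c a by (simp add: pos_less_divide_eq)
  ultimately have p'F: "q2 / a1 \<in> Feas M a1 kp" using Feas_iff[OF a(1) kp] a by simp
  have "Rev M a2 (q2 / a2) = (q2 - meta M * a2) * traffic q2" using Rev_eq[OF p2(1) a2] p2 by simp
  also have "\<dots> < (q2 - meta M * a1) * traffic q2"
    using c traffic_pos[of q2] q10 q12 by (intro mult_strict_right_mono) auto
  also have "\<dots> = Rev M a1 (q2 / a1)" using Rev_eq[of "q2 / a1" a1] q10 q12 a by simp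
  also have "\<dots> \<le> Rev M a1 (q1 / a1)" using q1(4)[of "q1 / a1"] p'F unfolding is_eq_price_def by blast
  finally have R: "Rev M a2 (q2 / a2) < Rev M a1 (q1 / a1)" .
  have US: "usurplus M a2 (q2 / a2) < usurplus M a1 (q1 / a1)"
    using usurplus_eq[OF p1(1) a(1)] usurplus_eq[OF p2(1) a2] usurplus_strict[OF q10 q12] p1 p2 market_facts
    by simp
  have W: "welfare M a2 (q2 / a2) < welfare M a1 (q1 / a1)" using R US by (simp add: welfare_def)
  show ?thesis using q1(4) q2(4) q12 U R US W p1 p2 by auto
qed

end

theorem theorem2:
  fixes M :: "'t market"
  assumes "valid_market M"
  shows
  "(\<forall>ka k1 k2. 0 < ka \<and> ka \<le> 1 \<and> 0 < k1 \<and> k1 < k2 \<and> k2 \<le> 1 \<and>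
       opt_sat_cond M ka k1 \<and> opt_sat_cond M ka k2 \<longrightarrow>
       (\<exists>p. is_eq_price M ka k1 p) \<and> (\<exists>p. is_eq_price M ka k2 p) \<and>
       (\<forall>p1 p2. is_eq_price M ka k1 p1 \<and> is_eq_price M ka k2 p2 \<longrightarrow>
          p1 < p2 \<and>
          (\<forall>Phi\<in>{0<..mPhimax M}. user_util M ka p2 Phi < user_util M ka p1 Phi) \<and>
          Rev M ka p2 < Rev M ka p1 \<and>
          usurplus M ka p2 < usurplus M ka p1 \<and>
          welfare M ka p2 < welfare M ka p1))
   \<and> (\<forall>ka kp. 0 < ka \<and> ka \<le> 1 \<and> 0 < kp \<and> kp \<le> 1 \<and> opt_sat_cond M ka kp \<longrightarrow>
       (\<exists>D. ((\<lambda>k. Rev M ka (eq_price M ka k)) has_real_derivative D) (at kp within {0<..1})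
            \<and> D < 0))
   \<and> (\<forall>kp a1 a2. 0 < kp \<and> kp \<le> 1 \<and> 0 < a1 \<and> a1 < a2 \<and> a2 \<le> 1 \<and>
       opt_unsat_cond M a1 kp \<and> opt_unsat_cond M a2 kp \<longrightarrow>
       (\<exists>p. is_eq_price M a1 kp p) \<and> (\<exists>p. is_eq_price M a2 kp p) \<and>
       (\<forall>p1 p2. is_eq_price M a1 kp p1 \<and> is_eq_price M a2 kp p2 \<longrightarrow>
          p1 * a1 < p2 * a2 \<and>
          (\<forall>Phi\<in>{0<..mPhimax M}. user_util M a2 p2 Phi < user_util M a1 p1 Phi) \<and>
          Rev M a2 p2 < Rev M a1 p1 \<and>
          usurplus M a2 p2 < usurplus M a1 p1 \<and>
          welfare M a2 p2 < welfare M a1 p1))"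
proof -
  interpret market_model M by (rule market_model.intro[OF assms])
  show ?thesis
    apply (intro conjI; intro allI impI; elim conjE)
    subgoal using saturated_regime by blast
    subgoal using eq_revenue_deriv_kpeak has_field_derivative_at_within by blast
    subgoal using unsaturated_regime by blast
    done
qed

end
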